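(* Let $f:\mathbb{Z}_+^E\to\mathbb{R}_{\ge0}$ be non-negative and DR-submodular, accessible through a value oracle, $|E|=n$, $k$ a positive integer and $\alpha\in(0,1)$ a constant. The output $\mathbf{z}$ of Algorithm FastDrSub$(f,E,k,\alpha)$ is feasible for the DrSMC problem and satisfies $$f(\mathbf{z})\ge\frac{1}{8\frac{2-\alpha}{1-\alpha}+\frac{1}{\alpha}}\,\mathsf{opt},$$ and the algorithm uses $O(n\log k)$ oracle queries. In particular, for $\alpha=\frac{2\sqrt2-1}{7}$ the ratio equals $\frac{1}{17+4\sqrt2}\approx0.044$.
   Context: Notation: $E$ is a finite ground set of size $n$; $\mathbf{1}_e$ is the $e$-th unit vector; $\mathbf{x}\le\mathbf{y}$ is coordinatewise; $\|\mathbf{x}\|_1=\sum_{e}\mathbf{x}(e)$; $f(\mathbf{a}\mid\mathbf{b}):=f(\mathbf{a}+\mathbf{b})-f(\mathbf{b})$. $f$ is DR-submodular if $f(\mathbf{x}+\mathbf{1}_e)-f(\mathbf{x})\ge f(\mathbf{y}+\mathbf{1}_e)-f(\mathbf{y})$ for all $\mathbf{x}\le\mathbf{y}$ and $e\in E$. A query is one evaluation of $f$. DrSMC problem: maximize $f(\mathbf{x})$ over $\mathbf{x}\in\mathbb{Z}_+^E$ subject to $\|\mathbf{x}\|_1\le k$ and $\mathbf{0}\le\mathbf{x}\le k\cdot\mathbf{1}$; $\mathsf{opt}$ denotes its optimal value. Algorithm FastDrSub$(f,E,k,\alpha)$ (elements of $E$ are processed in a fixed order): 1. Compute $(d_{\max},e_{\max})\in\arg\max\{f(d\mathbf{1}_e):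 e\in E,\ d\in\mathbb{Z},\ \alpha k<d\le k\}$. 2. Set $\mathbf{x}\leftarrow\mathbf{0}$, $\mathbf{y}\leftarrow\mathbf{0}$. 3. For each $e\in E$ in order: let $d_{(\mathbf{x},e)}=\max\{d\in\mathbb{Z}: 0<d\le\alpha k,\ f(\mathbf{1}_e\mid\mathbf{x}+(d-1)\mathbf{1}_e)\ge f(\mathbf{x})/k\}$ and $d_{(\mathbf{y},e)}=\max\{d\in\mathbb{Z}: 0<d\le\alpha k,\ f(\mathbf{1}_e\mid\mathbf{y}+(d-1)\mathbf{1}_e)\ge f(\mathbf{y})/k\}$ (each computed by binary search on $d$, and taken to be $0$ if the set is empty). If $f(d_{(\mathbf{x},e)}\mathbf{1}_e\mid\mathbf{x})\ge f(d_{(\mathbf{y},e)}\mathbf{1}_e\mid\mathbf{y})$, set $\mathbf{x}\leftarrow\mathbf{x}+d_{(\mathbf{x},e)}\mathbf{1}_e$; otherwise set $\mathbf{y}\leftarrow\mathbf{y}+d_{(\mathbf{y},e)}\mathbf{1}_e$. 4. (Trimming) Let $e_1,e_2,\dots$ be the elements of $\{e:\mathbf{x}(e)>0\}$ listed in reverse order of their addition to $\mathbf{x}$ (most recent first) and $\mathbf{x}_t=\sum_{i=1}^t\mathbf{x}(e_i)\mathbf{1}_{e_i}$; let $\mathbf{x}'=\mathbf{x}_t$ for the largest $t$ with $\|\mathbf{x}_t\|_1\le k$. Define $\mathbf{y}'$ from $\mathbf{y}$ in the same way. 5. Return $\mathbf{z}\in\arg\max\{f(\mathbf{t}):\mathbf{t}\in\{\mathbf{x}',\mathbf{y}',d_{\max}\mathbf{1}_{e_{\max}}\}\}$.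 *)

theory Defs
  imports Complex_Main
begin

text \<open>Vectors in Z_+^E are modelled as functions 'a => nat that vanish outside E.
  The oracle f is an arbitrary function on such vectors; every evaluation of f
  performed by the algorithm below is counted as one query.\<close>

type_synonym 'a ivec = "'a \<Rightarrow> nat"

definition supp_in :: "'a set \<Rightarrow> 'a ivec \<Rightarrow> bool" where
  "supp_in E x \<longleftrightarrow> (\<forall>e. e \<notin> E \<longrightarrow> x e = 0)"

definition vunit :: "'a \<Rightarrow> nat \<Rightarrow> 'a ivec" where
  "vunit e d = (\<lambda>e'. if e' = e then d else 0)"

definition vadd :: "'a ivec \<Rightarrow> 'a \<Rightarrow> nat \<Rightarrow> 'a ivec" where
  "vadd x e d = x(e := x e + d)"

definition dr_submodular :: "'a set \<Rightarrow> ('a ivec \<Rightarrow> real) \<Rightarrow> bool" where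
  "dr_submodular E f \<longleftrightarrow>
     (\<forall>x y e. supp_in E x \<longrightarrow> supp_in E y \<longrightarrow> x \<le> y \<longrightarrow> e \<in> E \<longrightarrow>
        f (vadd x e 1) - f x \<ge> f (vadd y e 1) - f y)"

definition nonneg_on :: "'a set \<Rightarrow> ('a ivec \<Rightarrow> real) \<Rightarrow> bool" where
  "nonneg_on E f \<longleftrightarrow> (\<forall>x. supp_in E x \<longrightarrow> f x \<ge> 0)"

definition drsmc_feasible :: "'a set \<Rightarrow> nat \<Rightarrow> 'a ivec \<Rightarrow> bool" where
  "drsmc_feasible E k x \<longleftrightarrow> supp_in E x \<and> (\<Sum>e\<in>E. x e) \<le> k \<and> (\<forall>e\<in>E. x e \<le> k)"

definition drsmc_opt :: "'a set \<Rightarrow> nat \<Rightarrow> ('a ivec \<Rightarrow> real) \<Rightarrow> real" where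
  "drsmc_opt E k f = Max (f ` {x. drsmc_feasible E k x})"

text \<open>Binary search: largest d in [lo,hi] satisfying the (monotone) test P, where lo is
  accepted without testing.  P d returns the test outcome and the number of oracle
  queries the test used.  Result: (d, number of queries).\<close>
function bsearch :: "(nat \<Rightarrow> bool \<times> nat) \<Rightarrow> nat \<Rightarrow> nat \<Rightarrow> nat \<times> nat" where
  "bsearch P lo hi =
     (if hi \<le> lo then (lo, 0)
      else if fst (P ((lo + hi + 1) div 2))
      then (fst (bsearch P ((lo + hi + 1) div 2) hi),
            snd (P ((lo + hi + 1) div 2)) + snd (bsearch P ((lo + hi + 1) div 2) hi))
      else (fst (bsearch P lo ((lo + hi + 1) div 2 - 1)),
            snd (P ((lo + hi + 1) div 2)) + snd (bsearch P lo ((lo + hi + 1) div 2 - 1))))"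
  by pat_completeness auto
termination by (relation "measure (\<lambda>(P, lo, hi). hi - lo)") auto

text \<open>Step 3: d_(x,e) = max {d : 0 < d <= alpha k, f(1_e | x + (d-1) 1_e) >= f(x)/k}, 0 if empty,
  computed by binary search (3 queries per test).\<close>
definition dsel :: "('a ivec \<Rightarrow> real) \<Rightarrow> nat \<Rightarrow> real \<Rightarrow> 'a ivec \<Rightarrow> 'a \<Rightarrow> nat \<times> nat" where
  "dsel f k \<alpha> x e =
     bsearch (\<lambda>d. (f (vadd x e d) - f (vadd x e (d - 1)) \<ge> f x / real k, 3))
             0 (nat \<lfloor>\<alpha> * real k\<rfloor>)"

text \<open>Step 1, for a fixed element e: maximise the concave (by DR-submodularity) function
  d |-> f(d 1_e) over alpha k < d <= k by binary search on the sign of its increments.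
  Result: (d, queries), including the final evaluation of f(d 1_e).\<close>
definition dsing :: "('a ivec \<Rightarrow> real) \<Rightarrow> nat \<Rightarrow> real \<Rightarrow> 'a \<Rightarrow> nat \<times> nat" where
  "dsing f k \<alpha> e =
     (let r = bsearch (\<lambda>d. (f (vunit e d) \<ge> f (vunit e (d - 1)), 2))
                      (nat \<lfloor>\<alpha> * real k\<rfloor> + 1) k
      in (fst r, snd r + 1))"

text \<open>Step 1: (e_max, d_max) and number of queries.  The comparisons reuse already
  queried values f(d_e 1_e).\<close>
definition step1 :: "('a ivec \<Rightarrow> real) \<Rightarrow> nat \<Rightarrow> real \<Rightarrow> 'a list \<Rightarrow> ('a \<times> nat) \<times> nat" where
  "step1 f k \<alpha> es =
     (let cands = map (\<lambda>e. (e, fst (dsing f k \<alpha> e))) es;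
          best = foldl (\<lambda>b c. if f (vunit (fst c) (snd c)) > f (vunit (fst b) (snd b)) then c else b)
                       (hd cands) (tl cands)
      in (best, sum_list (map (\<lambda>e. snd (dsing f k \<alpha> e)) es)))"

text \<open>Step 3 main loop.  State: (x, addition order of x, y, addition order of y, queries).\<close>
fun step3 :: "('a ivec \<Rightarrow> real) \<Rightarrow> nat \<Rightarrow> real \<Rightarrow> 'a list \<Rightarrow>
      'a ivec \<times> 'a list \<times> 'a ivec \<times> 'a list \<times> nat \<Rightarrow>
      'a ivec \<times> 'a list \<times> 'a ivec \<times> 'a list \<times> nat" where
  "step3 f k \<alpha> [] s = s"
| "step3 f k \<alpha> (e # es) (x, ox, y, oy, c) =
     (let rx = dsel f k \<alpha> x e; ry = dsel f k \<alpha> y e;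
          c' = c + snd rx + snd ry + 4
      in if f (vadd x e (fst rx)) - f x \<ge> f (vadd y e (fst ry)) - f y
         then step3 f k \<alpha> es (vadd x e (fst rx), ox @ [e], y, oy, c')
         else step3 f k \<alpha> es (x, ox, vadd y e (fst ry), oy @ [e], c'))"

definition trim :: "nat \<Rightarrow> 'a ivec \<Rightarrow> 'a list \<Rightarrow> 'a ivec" where
  "trim k x ord =
     (let R = rev (filter (\<lambda>e. 0 < x e) ord);
          t = (GREATEST t. t \<le> length R \<and> (\<Sum>e\<leftarrow>take t R. x e) \<le> k)
      in (\<lambda>e. if e \<in> set (take t R) then x e else 0))"

text \<open>FastDrSub(f, E, k, alpha) with E given as the processing order es.
  Returns (z, number of oracle queries).\<close>
definition fastdrsub :: "('a ivec \<Rightarrow> real) \<Rightarrow> 'a list \<Rightarrow> nat \<Rightarrow> real \<Rightarrow> 'a ivec \<times> nat" where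
  "fastdrsub f es k \<alpha> =
     (let s1 = step1 f k \<alpha> es;
          em = fst (fst s1); dm = snd (fst s1);
          s3 = step3 f k \<alpha> es (\<lambda>_. 0, [], \<lambda>_. 0, [], 0);
          x = fst s3; ox = fst (snd s3); y = fst (snd (snd s3));
          oy = fst (snd (snd (snd s3))); c3 = snd (snd (snd (snd s3)));
          x' = trim k x ox; y' = trim k y oy; m = vunit em dm;
          z = (if f x' \<ge> f y' \<and> f x' \<ge> f m then x' else if f y' \<ge> f m then y' else m)
      in (z, snd s1 + c3 + 3))"

end

theory Submission
  imports Defs "HOL-Library.Function_Algebras"
begin

text \<open>
  Step 3 builds two solutions \<open>x\<close> and \<open>y\<close> greedily: an element receives as many copies as
  still gain at least the current threshold \<open>f(x)/k\<close> each, and goes to the solution gaining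
  more. Split an optimal \<open>w\<close> into its entries above \<open>\<alpha> k\<close> and the rest \<open>w\<^sub>s\<close>. There are at
  most \<open>1/\<alpha>\<close> large entries, each worth at most the best single-element vector of step 1.
  Raising \<open>x\<close> to \<open>max(w\<^sub>s, x)\<close> gains per unit at most the threshold, except at elements
  given to \<open>y\<close>, where it gains at most what \<open>y\<close> gained there; symmetrically for \<open>y\<close>. As
  \<open>x\<close> and \<open>y\<close> have disjoint supports, DR-submodularity gives
  \<open>f(w\<^sub>s) + f(max(w\<^sub>s, x, y)) \<le> f(max(w\<^sub>s, x)) + f(max(w\<^sub>s, y))\<close>, hence
  \<open>f(w\<^sub>s) \<le> 3 f(x) + 3 f(y)\<close>. Trimming to mass \<open>k\<close> keeps a suffix of mass at least
  \<open>(1 - \<alpha>) k\<close> whose units each gained at least the threshold, which loses at most a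
  factor \<open>(2 - \<alpha>)/(1 - \<alpha>)\<close>. Every binary search costs \<open>O(log k)\<close> queries.
\<close>

declare bsearch.simps [simp del]

lemma vadd_0 [simp]: "vadd x e 0 = x"
  by (simp add: vadd_def)

lemma vadd_vadd: "vadd (vadd x e a) e b = vadd x e (a + b)"
  by (simp add: vadd_def add.assoc)

lemma vadd_mono: "x \<le> y \<Longrightarrow> vadd x e d \<le> vadd y e d"
  by (simp add: vadd_def le_fun_def)

lemma le_vadd: "x \<le> vadd x e d"
  by (simp add: vadd_def le_fun_def)

lemma vunit_eq_vadd: "vunit e d = vadd (\<lambda>_. 0) e d"
  by (auto simp: vunit_def vadd_def)

lemma add_eq_vadd_update: "x + c = vadd (x + c(a := 0)) a (c a)"
  by (auto simp: vadd_def)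

lemma supp_in_zero [simp]: "supp_in E (\<lambda>_. 0)"
  by (simp add: supp_in_def)

lemma supp_in_vadd: "supp_in E x \<Longrightarrow> e \<in> E \<Longrightarrow> supp_in E (vadd x e d)"
  by (auto simp: supp_in_def vadd_def)

lemma supp_in_add: "supp_in E x \<Longrightarrow> supp_in E c \<Longrightarrow> supp_in E (x + c)"
  by (simp add: supp_in_def)

lemma supp_in_update_zero: "supp_in (insert a A) c \<Longrightarrow> supp_in A (c(a := 0))"
  by (auto simp: supp_in_def)

lemma supp_in_mono: "supp_in A c \<Longrightarrow> A \<subseteq> E \<Longrightarrow> supp_in E c"
  by (auto simp: supp_in_def)

definition vrestrict :: "'a ivec \<Rightarrow> 'a set \<Rightarrow> 'a ivec" where
  "vrestrict x S = (\<lambda>e. if e \<in> S then x e else 0)"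

lemma vrestrict_cong: "(\<And>e. e \<in> S \<Longrightarrow> x' e = x e) \<Longrightarrow> vrestrict x' S = vrestrict x S"
  by (auto simp: vrestrict_def)

lemma vrestrict_id: "(\<And>e. e \<notin> S \<Longrightarrow> x e = 0) \<Longrightarrow> vrestrict x S = x"
  by (auto simp: vrestrict_def)

lemma vrestrict_empty [simp]: "vrestrict x {} = (\<lambda>_. 0)"
  by (simp add: vrestrict_def)

lemma vrestrict_insert: "b \<notin> S \<Longrightarrow> vrestrict x (insert b S) = vadd (vrestrict x S) b (x b)"
  by (auto simp: vrestrict_def vadd_def)

lemma vrestrict_mono: "S \<subseteq> T \<Longrightarrow> vrestrict x S \<le> vrestrict x T"
  by (auto simp: vrestrict_def le_fun_def)

lemma supp_in_vrestrict: "supp_in E x \<Longrightarrow> supp_in E (vrestrict x S)"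
  by (simp add: supp_in_def vrestrict_def)

lemma telescope_le:
  fixes g :: "nat \<Rightarrow> real"
  assumes steps: "\<And>j. a < j \<Longrightarrow> j \<le> b \<Longrightarrow> g j - g (j - 1) \<le> t" and "a \<le> b"
  shows "g b - g a \<le> real (b - a) * t"
  using \<open>a \<le> b\<close>
proof (induction b rule: dec_induct)
  case base
  then show ?case by simp
next
  case (step n)
  have "g (Suc n) - g n \<le> t"
    using steps[of "Suc n"] step.hyps by simp
  with step.IH step.hyps show ?case
    by (simp add: Suc_diff_le algebra_simps)
qed

lemma telescope_ge:
  fixes g :: "nat \<Rightarrow> real"
  assumes "\<And>j. a < j \<Longrightarrow> j \<le> b \<Longrightarrow> t \<le> g j - g (j - 1)" and "a \<le> b"
  shows "real (b - a) * t \<le> g b - g a"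
  using telescope_le[of a b "\<lambda>j. - g j" "- t"] assms by force

lemma telescope_mono:
  fixes g :: "nat \<Rightarrow> real"
  assumes "\<And>j. a < j \<Longrightarrow> j \<le> b \<Longrightarrow> g (j - 1) \<le> g j" and "a \<le> b"
  shows "g a \<le> g b"
  using telescope_ge[of a b 0 g] assms by force

definition bsearch_spec :: "(nat \<Rightarrow> bool) \<Rightarrow> nat \<Rightarrow> nat \<Rightarrow> nat \<Rightarrow> bool" where
  "bsearch_spec Q lo hi r \<longleftrightarrow> lo \<le> r \<and> r \<le> max lo hi \<and>
     (\<forall>j. lo < j \<longrightarrow> j \<le> r \<longrightarrow> Q j) \<and> (\<forall>j. r < j \<longrightarrow> j \<le> hi \<longrightarrow> \<not> Q j)"

lemma bsearch_spec_right:
  assumes spec: "bsearch_spec Q m hi r" and "lo < m" "m \<le> hi" and left: "\<forall>j. lo < j \<longrightarrow> j \<le> m \<longrightarrow> Q j"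
  shows "bsearch_spec Q lo hi r"
  unfolding bsearch_spec_def
proof (intro conjI allI impI)
  fix j assume "lo < j" "j \<le> r"
  then show "Q j"
    using spec left unfolding bsearch_spec_def by (cases "j \<le> m") auto
qed (use assms in \<open>auto simp: bsearch_spec_def max_def\<close>)

lemma bsearch_spec_left:
  assumes spec: "bsearch_spec Q lo (m - 1) r" and "lo < m" "m \<le> hi" and right: "\<forall>j. m \<le> j \<longrightarrow> j \<le> hi \<longrightarrow> \<not> Q j"
  shows "bsearch_spec Q lo hi r"
  unfolding bsearch_spec_def
proof (intro conjI allI impI)
  fix j assume "r < j" "j \<le> hi"
  then show "\<not> Q j"
    using spec right unfolding bsearch_spec_def by (cases "m \<le> j") auto
qed (use assms in \<open>auto simp: bsearch_spec_def max_def\<close>)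

lemma bsearch_correct:
  assumes "\<And>i j. lo < i \<Longrightarrow> i \<le> j \<Longrightarrow> j \<le> hi \<Longrightarrow> fst (P j) \<Longrightarrow> fst (P i)"
  shows "bsearch_spec (\<lambda>d. fst (P d)) lo hi (fst (bsearch P lo hi))"
  using assms
proof (induction P lo hi rule: bsearch.induct)
  case (1 P lo hi)
  define mid where "mid = (lo + hi + 1) div 2"
  show ?case
  proof (cases "hi \<le> lo")
    case True
    then have "bsearch P lo hi = (lo, 0)"
      by (subst bsearch.simps) simp
    with True show ?thesis
      by (simp add: bsearch_spec_def)
  next
    case False
    then have mid: "lo < mid" "mid \<le> hi"
      unfolding mid_def by auto
    show ?thesis
    proof (cases "fst (P mid)")
      case True
      then have "fst (bsearch P lo hi) = fst (bsearch P mid hi)"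
        using False by (subst bsearch.simps) (simp add: mid_def)
      moreover have "bsearch_spec (\<lambda>d. fst (P d)) mid hi (fst (bsearch P mid hi))"
        using "1.IH"(1)[OF False] True "1.prems" mid unfolding mid_def[symmetric] by auto
      moreover have "\<forall>j. lo < j \<longrightarrow> j \<le> mid \<longrightarrow> fst (P j)"
        using "1.prems"[of _ mid] True mid by auto
      ultimately show ?thesis
        using mid by (simp add: bsearch_spec_right)
    next
      case False': False
      then have "fst (bsearch P lo hi) = fst (bsearch P lo (mid - 1))"
        using False by (subst bsearch.simps) (simp add: mid_def)
      moreover have "bsearch_spec (\<lambda>d. fst (P d)) lo (mid - 1) (fst (bsearch P lo (mid - 1)))"
        using "1.IH"(3)[OF False] False' "1.prems" mid unfolding mid_def[symmetric] by auto
      moreover have "\<forall>j. mid \<le> j \<longrightarrow> j \<le> hi \<longrightarrow> \<not> fst (P j)"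
        using "1.prems"[of mid] False' mid by auto
      ultimately show ?thesis
        using mid by (simp add: bsearch_spec_left)
    qed
  qed
qed

lemma bsearch_step:
  assumes "lo < hi"
  obtains a b where "snd (bsearch P lo hi) = snd (P ((lo + hi + 1) div 2)) + snd (bsearch P a b)"
    and "2 * (b - a) \<le> hi - lo"
proof -
  define mid where "mid = (lo + hi + 1) div 2"
  have mid: "lo + hi \<le> 2 * mid" "2 * mid \<le> lo + hi + 1"
    unfolding mid_def by simp_all
  show ?thesis
  proof (cases "fst (P mid)")
    case True
    then have "snd (bsearch P lo hi) = snd (P mid) + snd (bsearch P mid hi)"
      using assms by (subst bsearch.simps) (simp add: mid_def)
    moreover have "2 * (hi - mid) \<le> hi - lo"
      using mid by linarith
    ultimately show ?thesis
      using that unfolding mid_def by blast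
  next
    case False
    then have "snd (bsearch P lo hi) = snd (P mid) + snd (bsearch P lo (mid - 1))"
      using assms by (subst bsearch.simps) (simp add: mid_def)
    moreover have "2 * (mid - 1 - lo) \<le> hi - lo"
      using mid by linarith
    ultimately show ?thesis
      using that unfolding mid_def by blast
  qed
qed

lemma bsearch_queries:
  assumes cost: "\<And>d. snd (P d) = c" and "1 \<le> N" "real (hi - lo) \<le> N"
  shows "real (snd (bsearch P lo hi)) \<le> real c * (1 + log 2 N)"
  using assms(2,3)
proof (induction "hi - lo" arbitrary: lo hi N rule: less_induct)
  case less
  have empty: "snd (bsearch P a b) = 0" if "b \<le> a" for a b
    using that by (subst bsearch.simps) simp
  have log_N: "0 \<le> log 2 N"
    using less.prems(1) by simp
  show ?case
  proof (cases "hi \<le> lo")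
    case True
    with empty log_N show ?thesis by simp
  next
    case False
    then have "lo < hi"
      by simp
    then obtain a b where "snd (bsearch P lo hi) = snd (P ((lo + hi + 1) div 2)) + snd (bsearch P a b)"
      and half: "2 * (b - a) \<le> hi - lo"
      by (rule bsearch_step)
    then have step: "snd (bsearch P lo hi) = c + snd (bsearch P a b)"
      using cost by simp
    have "real (snd (bsearch P a b)) \<le> real c * log 2 N"
    proof (cases "b \<le> a")
      case True
      with empty log_N show ?thesis by simp
    next
      case False
      have "real (2 * (b - a)) \<le> N"
        using half less.prems(2) by linarith
      then have "1 \<le> N / 2" "real (b - a) \<le> N / 2"
        using False by auto
      with less.hyps[of b a] half False
      have "real (snd (bsearch P a b)) \<le> real c * (1 + log 2 (N / 2))"
        by simp
      also have "log 2 (N / 2) = log 2 N - 1"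
        using less.prems(1) by (simp add: log_divide)
      finally show ?thesis by simp
    qed
    with step show ?thesis
      by (simp add: algebra_simps)
  qed
qed

lemma foldl_argmax:
  fixes F :: "'b \<Rightarrow> real"
  defines "pick \<equiv> \<lambda>b c. if F c > F b then c else b"
  shows "foldl pick b cs \<in> set (b # cs) \<and> (\<forall>c\<in>set (b # cs). F c \<le> F (foldl pick b cs))"
proof (induction cs arbitrary: b)
  case Nil
  then show ?case by simp
next
  case (Cons c cs)
  have "pick b c \<in> {b, c}" "F b \<le> F (pick b c)" "F c \<le> F (pick b c)"
    by (auto simp: pick_def)
  then show ?case using Cons[of "pick b c"] by (auto intro: order_trans)
qed

lemma filter_positive_vadd_snoc:
  assumes "e \<notin> set ox" "x e = 0"
  shows "filter (\<lambda>e'. 0 < vadd x e d e') (ox @ [e]) = filter (\<lambda>e'. 0 < x e') ox @ (if 0 < d then [e] else [])"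
proof -
  have "filter (\<lambda>e'. 0 < vadd x e d e') ox = filter (\<lambda>e'. 0 < x e') ox"
    using assms(1) by (intro filter_cong) (auto simp: vadd_def)
  with assms show ?thesis by (simp add: vadd_def)
qed

lemma trim_eq_vrestrict_suffix:
  assumes bound: "\<forall>e. x e \<le> h"
  obtains A S where "filter (\<lambda>e. 0 < x e) ox = A @ S" "trim k x ox = vrestrict x (set S)"
    "sum_list (map x S) \<le> k" "A = [] \<or> k < sum_list (map x S) + h"
proof -
  define L where "L = filter (\<lambda>e. 0 < x e) ox"
  define R where "R = rev L"
  define P where "P = (\<lambda>t. t \<le> length R \<and> (\<Sum>e\<leftarrow>take t R. x e) \<le> k)"
  define t where "t = (GREATEST t. P t)"
  have "P 0" "\<And>t. P t \<Longrightarrow> t \<le> length R"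
    by (simp_all add: P_def)
  then have Pt: "P t" and t_max: "\<And>t'. P t' \<Longrightarrow> t' \<le> t"
    unfolding t_def by (blast intro: GreatestI_nat Greatest_le_nat)+
  define A where "A = take (length L - t) L"
  define S where "S = drop (length L - t) L"
  have "L = A @ S"
    by (simp add: A_def S_def)
  have take_R: "take t R = rev S"
    by (simp add: R_def S_def take_rev)
  have "trim k x ox = vrestrict x (set (take t R))"
    unfolding trim_def Let_def R_def[unfolded L_def] t_def[unfolded P_def R_def L_def] vrestrict_def ..
  then have "trim k x ox = vrestrict x (set S)"
    by (simp add: take_R)
  moreover have sum_S: "(\<Sum>e\<leftarrow>take t R. x e) = sum_list (map x S)"
    by (simp add: take_R rev_map[symmetric] sum_list_rev)
  moreover have "A = [] \<or> k < sum_list (map x S) + h"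
  proof (cases "t < length R")
    case True
    then have "\<not> P (Suc t)"
      using t_max[of "Suc t"] by auto
    then have "k < (\<Sum>e\<leftarrow>take (Suc t) R. x e)"
      using True by (simp add: P_def)
    also have "\<dots> = sum_list (map x S) + x (R ! t)"
      using True sum_S by (simp add: take_Suc_conv_app_nth)
    finally show ?thesis
      using bound[rule_format, of "R ! t"] by linarith
  next
    case False
    then show ?thesis
      using Pt by (simp add: A_def P_def R_def)
  qed
  ultimately show ?thesis
    using that \<open>L = A @ S\<close> Pt by (simp add: L_def P_def)
qed

lemma drsmc_opt_le:
  assumes "finite E" "\<And>w. drsmc_feasible E k w \<Longrightarrow> f w \<le> c"
  shows "drsmc_opt E k f \<le> c"
proof -
  have "{w. drsmc_feasible E k w} \<subseteq> {w. \<forall>e. (e \<in> E \<longrightarrow> w e \<in> {0..k}) \<and> (e \<notin> E \<longrightarrow> w e = 0)}"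
    by (auto simp: drsmc_feasible_def supp_in_def)
  moreover have "finite {w. \<forall>e. (e \<in> E \<longrightarrow> w e \<in> {0..k}) \<and> (e \<notin> E \<longrightarrow> w e = (0::nat))}"
    using assms(1) by (intro finite_set_of_finite_funs) simp_all
  ultimately have "finite {w. drsmc_feasible E k w}"
    by (rule finite_subset)
  moreover have "drsmc_feasible E k (\<lambda>_. 0)"
    by (simp add: drsmc_feasible_def)
  ultimately show ?thesis
    unfolding drsmc_opt_def using assms(2) by (subst Max_le_iff) auto
qed

lemma sum_filter_update_True:
  assumes "finite D" "e \<notin> D"
  shows "(\<Sum>e'\<in>{e'\<in>insert e D. (B(e := True)) e'}. (g(e := v)) e') = v + (\<Sum>e'\<in>{e'\<in>D. B e'}. g e')"
proof -
  have "{e'\<in>insert e D. (B(e := True)) e'} = insert e {e'\<in>D. B e'}"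
    by auto
  moreover have "(\<Sum>e'\<in>{e'\<in>D. B e'}. (g(e := v)) e') = (\<Sum>e'\<in>{e'\<in>D. B e'}. g e')"
    using assms(2) by (intro sum.cong) auto
  ultimately show ?thesis
    using assms by simp
qed

lemma sum_filter_update_False:
  assumes "e \<notin> D"
  shows "(\<Sum>e'\<in>{e'\<in>insert e D. (B(e := False)) e'}. (g(e := v)) e') = (\<Sum>e'\<in>{e'\<in>D. B e'}. g e')"
proof -
  have "{e'\<in>insert e D. (B(e := False)) e'} = {e'\<in>D. B e'}"
    using assms by auto
  moreover have "(\<Sum>e'\<in>{e'\<in>D. B e'}. (g(e := v)) e') = (\<Sum>e'\<in>{e'\<in>D. B e'}. g e')"
    using assms by (intro sum.cong) auto
  ultimately show ?thesis
    by simp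
qed

section \<open>Consequences of DR-submodularity\<close>

locale dr_submodular_on =
  fixes E :: "'a set" and f :: "'a ivec \<Rightarrow> real"
  assumes finite_E: "finite E" and dr: "dr_submodular E f"
begin

lemma increment_antimono:
  assumes "supp_in E x" "supp_in E y" "x \<le> y" "e \<in> E"
  shows "f (vadd y e d) - f y \<le> f (vadd x e d) - f x"
proof (induction d)
  case 0
  then show ?case by simp
next
  case (Suc d)
  have "f (vadd (vadd y e d) e 1) - f (vadd y e d) \<le> f (vadd (vadd x e d) e 1) - f (vadd x e d)"
    using dr supp_in_vadd[OF assms(1,4)] supp_in_vadd[OF assms(2,4)] vadd_mono[OF assms(3)] assms(4)
    unfolding dr_submodular_def by blast
  with Suc show ?case by (simp add: vadd_vadd)
qed

definition marginal :: "'a ivec \<Rightarrow> 'a \<Rightarrow> nat \<Rightarrow> real" where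
  "marginal v e j = f (vadd v e j) - f (vadd v e (j - 1))"

lemma marginal_antimono:
  assumes "supp_in E v" "e \<in> E" "0 < i" "i \<le> j"
  shows "marginal v e j \<le> marginal v e i"
proof -
  have "vadd v e (i - 1) \<le> vadd v e (j - 1)"
    using assms by (simp add: vadd_def le_fun_def)
  then have "f (vadd (vadd v e (j - 1)) e 1) - f (vadd v e (j - 1))
      \<le> f (vadd (vadd v e (i - 1)) e 1) - f (vadd v e (i - 1))"
    by (intro increment_antimono supp_in_vadd assms(1,2))
  with assms show ?thesis by (simp add: marginal_def vadd_vadd)
qed

lemma add_increment_antimono:
  assumes "supp_in E c" "supp_in E x" "supp_in E y" "x \<le> y"
  shows "f (y + c) - f y \<le> f (x + c) - f x"
proof -
  have "f (y + c) - f y \<le> f (x + c) - f x" if "finite A" "A \<subseteq> E" "supp_in A c" for A c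
    using that
  proof (induction A arbitrary: c rule: finite_induct)
    case empty
    then have "c = 0" by (auto simp: supp_in_def)
    then show ?case by simp
  next
    case (insert a A)
    let ?c = "c(a := 0)"
    have c: "supp_in A ?c"
      using insert.prems(2) by (rule supp_in_update_zero)
    have IH: "f (y + ?c) - f y \<le> f (x + ?c) - f x"
      using insert.IH[OF _ c] insert.prems(1) by blast
    have "supp_in E ?c" "x + ?c \<le> y + ?c"
      using supp_in_mono[OF c] insert.prems(1) assms(4) by (auto simp: le_fun_def)
    then have "f (vadd (y + ?c) a (c a)) - f (y + ?c) \<le> f (vadd (x + ?c) a (c a)) - f (x + ?c)"
      using insert.prems(1) by (intro increment_antimono supp_in_add assms(2,3)) auto
    then have "f (y + c) - f (y + ?c) \<le> f (x + c) - f (x + ?c)"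
      by (simp only: add_eq_vadd_update[of _ c a, symmetric])
    with IH show ?case by linarith
  qed
  from this[OF finite_E subset_refl assms(1)] show ?thesis .
qed

lemma add_increment_le_sum:
  assumes "supp_in E c" "supp_in E x"
  shows "f (x + c) - f x \<le> (\<Sum>e\<in>E. f (vadd x e (c e)) - f x)"
proof -
  have "f (x + c) - f x \<le> (\<Sum>e\<in>A. f (vadd x e (c e)) - f x)"
    if "finite A" "A \<subseteq> E" "supp_in A c" for A c
    using that
  proof (induction A arbitrary: c rule: finite_induct)
    case empty
    then have "c = 0" by (auto simp: supp_in_def)
    then show ?case by simp
  next
    case (insert a A)
    let ?c = "c(a := 0)"
    have c: "supp_in A ?c"
      using insert.prems(2) by (rule supp_in_update_zero)
    have "f (x + ?c) - f x \<le> (\<Sum>e\<in>A. f (vadd x e (?c e)) - f x)"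
      using insert.IH[OF _ c] insert.prems(1) by blast
    also have "\<dots> = (\<Sum>e\<in>A. f (vadd x e (c e)) - f x)"
      using insert.hyps(2) by (intro sum.cong) auto
    finally have IH: "f (x + ?c) - f x \<le> (\<Sum>e\<in>A. f (vadd x e (c e)) - f x)" .
    have "supp_in E ?c" "x \<le> x + ?c"
      using supp_in_mono[OF c] insert.prems(1) by (auto simp: le_fun_def)
    then have "f (vadd (x + ?c) a (c a)) - f (x + ?c) \<le> f (vadd x a (c a)) - f x"
      using insert.prems(1) by (intro increment_antimono supp_in_add assms(2)) auto
    then have "f (x + c) - f (x + ?c) \<le> f (vadd x a (c a)) - f x"
      by (simp only: add_eq_vadd_update[of _ c a, symmetric])
    with IH show ?case
      using sum.insert[OF insert.hyps, of "\<lambda>e. f (vadd x e (c e)) - f x"] by linarith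
  qed
  from this[OF finite_E subset_refl assms(1)] show ?thesis .
qed

lemma sup_disjoint_supports:
  assumes "supp_in E w" "supp_in E x" "supp_in E y" and disjoint: "\<And>e. x e = 0 \<or> y e = 0"
  shows "f w + f (sup (sup w x) y) \<le> f (sup w x) + f (sup w y)"
proof -
  let ?c = "\<lambda>e. x e - w e"
  have "sup w x = w + ?c"
    by (auto simp: fun_eq_iff sup_nat_def)
  moreover have "sup (sup w x) y = sup w y + ?c"
  proof
    fix e
    show "sup (sup w x) y e = (sup w y + ?c) e"
      using disjoint[of e] by (auto simp: sup_nat_def)
  qed
  moreover have "f (sup w y + ?c) - f (sup w y) \<le> f (w + ?c) - f w"
    using assms(1-3) by (intro add_increment_antimono) (auto simp: supp_in_def le_fun_def)
  ultimately show ?thesis by simp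
qed

lemma vrestrict_append_increment:
  assumes "supp_in E x" "distinct (A @ B)" "set (A @ B) \<subseteq> E"
  shows "f (vrestrict x (set (A @ B))) - f (vrestrict x (set A)) \<le> f (vrestrict x (set B)) - f (\<lambda>_. 0)"
  using assms(2,3)
proof (induction B rule: rev_induct)
  case Nil
  then show ?case by simp
next
  case (snoc b B)
  then have "b \<notin> set (A @ B)" "b \<in> E"
    by auto
  then have "vrestrict x (set (A @ B @ [b])) = vadd (vrestrict x (set (A @ B))) b (x b)"
    "vrestrict x (set (B @ [b])) = vadd (vrestrict x (set B)) b (x b)"
    using vrestrict_insert[of b _ x] by (simp_all add: insert_commute)
  moreover have "f (vadd (vrestrict x (set (A @ B))) b (x b)) - f (vrestrict x (set (A @ B)))
      \<le> f (vadd (vrestrict x (set B)) b (x b)) - f (vrestrict x (set B))"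
    using \<open>b \<in> E\<close> assms(1)
    by (intro increment_antimono supp_in_vrestrict vrestrict_mono) auto
  moreover have "f (vrestrict x (set (A @ B))) - f (vrestrict x (set A)) \<le> f (vrestrict x (set B)) - f (\<lambda>_. 0)"
    using snoc by simp
  ultimately show ?case by simp
qed

end

section \<open>The threshold greedy phase\<close>

locale fastdrsub_setting = dr_submodular_on E f
  for E :: "'a set" and f :: "'a ivec \<Rightarrow> real" +
  fixes k :: nat and \<alpha> :: real
  assumes nonneg: "nonneg_on E f" and k_pos: "0 < k" and \<alpha>_pos: "0 < \<alpha>" and \<alpha>_less_1: "\<alpha> < 1"
begin

definition alpha_k :: nat where
  "alpha_k = nat \<lfloor>\<alpha> * real k\<rfloor>"

lemma alpha_k_le: "real alpha_k \<le> \<alpha> * real k"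
  using \<alpha>_pos by (simp add: alpha_k_def)

lemma alpha_k_gt: "\<alpha> * real k < real alpha_k + 1"
  using \<alpha>_pos by (simp add: alpha_k_def)

lemma alpha_k_less_k: "alpha_k < k"
proof -
  have "\<alpha> * real k < real k"
    using \<alpha>_less_1 k_pos by simp
  with alpha_k_le show ?thesis by linarith
qed

lemma f_nonneg: "supp_in E x \<Longrightarrow> 0 \<le> f x"
  using nonneg by (simp add: nonneg_on_def)

lemma threshold_nonneg: "supp_in E x \<Longrightarrow> 0 \<le> f x / real k"
  using f_nonneg by simp

lemma threshold_mono: "f x \<le> f y \<Longrightarrow> f x / real k \<le> f y / real k"
  using k_pos by (simp add: divide_right_mono)

text \<open>\<open>threshold_step v e d\<close> says that \<open>d = d\<^bsub>(v,e)\<^esub>\<close>: by DR-submodularity the marginals of \<open>e\<close>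
  are non-increasing, so the increments passing the threshold \<open>f v / k\<close> form an initial segment.\<close>
definition threshold_step :: "'a ivec \<Rightarrow> 'a \<Rightarrow> nat \<Rightarrow> bool" where
  "threshold_step v e d \<longleftrightarrow> d \<le> alpha_k \<and>
     (\<forall>j. 0 < j \<longrightarrow> j \<le> d \<longrightarrow> f v / real k \<le> marginal v e j) \<and>
     (\<forall>j. d < j \<longrightarrow> j \<le> alpha_k \<longrightarrow> marginal v e j < f v / real k)"

lemma threshold_step_le: "threshold_step v e d \<Longrightarrow> d \<le> alpha_k"
  by (simp add: threshold_step_def)

lemma threshold_step_passes:
  "threshold_step v e d \<Longrightarrow> 0 < j \<Longrightarrow> j \<le> d \<Longrightarrow> f v / real k \<le> f (vadd v e j) - f (vadd v e (j - 1))"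
  by (simp add: threshold_step_def marginal_def)

lemma threshold_step_fails:
  "threshold_step v e d \<Longrightarrow> d < j \<Longrightarrow> j \<le> alpha_k \<Longrightarrow> f (vadd v e j) - f (vadd v e (j - 1)) < f v / real k"
  by (simp add: threshold_step_def marginal_def)

lemma threshold_step_dsel:
  assumes "supp_in E v" "e \<in> E"
  shows "threshold_step v e (fst (dsel f k \<alpha> v e))"
proof -
  let ?P = "\<lambda>d. (f (vadd v e d) - f (vadd v e (d - 1)) \<ge> f v / real k, 3::nat)"
  have "bsearch_spec (\<lambda>d. fst (?P d)) 0 alpha_k (fst (bsearch ?P 0 alpha_k))"
  proof (rule bsearch_correct)
    fix i j assume "0 < i" "i \<le> j" "fst (?P j)"
    then show "fst (?P i)"
      using marginal_antimono[OF assms, of i j] by (simp add: marginal_def)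
  qed
  then show ?thesis
    unfolding threshold_step_def dsel_def alpha_k_def[symmetric] bsearch_spec_def
    by (auto simp: marginal_def not_le)
qed

lemma threshold_step_gain:
  assumes "threshold_step v e d"
  shows "real d * (f v / real k) \<le> f (vadd v e d) - f v"
  using telescope_ge[of 0 d "f v / real k" "\<lambda>j. f (vadd v e j)"] threshold_step_passes[OF assms]
  by simp

lemma threshold_step_increases:
  assumes "threshold_step v e d" "supp_in E v"
  shows "f v \<le> f (vadd v e d)"
proof -
  have "0 \<le> real d * (f v / real k)"
    using threshold_nonneg[OF assms(2)] by (intro mult_nonneg_nonneg) simp_all
  with threshold_step_gain[OF assms(1)] show ?thesis by linarith
qed

lemma threshold_step_beyond:
  assumes "threshold_step v e d" "d \<le> a" "a \<le> b" "b \<le> alpha_k"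
  shows "f (vadd v e b) - f (vadd v e a) \<le> real (b - a) * (f v / real k)"
proof (rule telescope_le[where g = "\<lambda>j. f (vadd v e j)", OF _ assms(3)])
  fix j assume "a < j" "j \<le> b"
  with assms show "f (vadd v e j) - f (vadd v e (j - 1)) \<le> f v / real k"
    using threshold_step_fails[OF assms(1), of j] by simp
qed

lemma raise_after_taken:
  assumes "supp_in E v" "supp_in E v\<^sub>0" "e \<in> E"
    and "vadd v\<^sub>0 e d \<le> v" "threshold_step v\<^sub>0 e d" "f v\<^sub>0 \<le> f v" "t \<le> alpha_k"
  shows "f (vadd v e (t - d)) - f v \<le> real t * (f v / real k)"
proof -
  have "f (vadd v e (t - d)) - f v \<le> f (vadd (vadd v\<^sub>0 e d) e (t - d)) - f (vadd v\<^sub>0 e d)"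
    using assms(1-4) by (intro increment_antimono supp_in_vadd)
  also have "\<dots> = f (vadd v\<^sub>0 e (d + (t - d))) - f (vadd v\<^sub>0 e d)"
    by (simp add: vadd_vadd)
  also have "\<dots> \<le> real (d + (t - d) - d) * (f v\<^sub>0 / real k)"
    using assms(5,7) threshold_step_le[OF assms(5)] by (intro threshold_step_beyond) auto
  also have "\<dots> \<le> real t * (f v / real k)"
    using threshold_nonneg[OF assms(2)] threshold_mono[OF assms(6)] by (intro mult_mono) auto
  finally show ?thesis .
qed

lemma raise_after_skipped:
  assumes "supp_in E v" "supp_in E v\<^sub>0" "e \<in> E"
    and "v\<^sub>0 \<le> v" "threshold_step v\<^sub>0 e d" "f v\<^sub>0 \<le> f v" "t \<le> alpha_k"
  shows "f (vadd v e t) - f v \<le> real t * (f v / real k) + (f (vadd v\<^sub>0 e d) - f v\<^sub>0)"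
proof -
  have "f (vadd v e t) - f v \<le> f (vadd v\<^sub>0 e t) - f v\<^sub>0"
    using assms(1-4) by (intro increment_antimono)
  also have "\<dots> \<le> real t * (f v / real k) + (f (vadd v\<^sub>0 e d) - f v\<^sub>0)"
  proof (cases "t \<le> d")
    case True
    have "f (vadd v\<^sub>0 e t) \<le> f (vadd v\<^sub>0 e d)"
    proof (rule telescope_mono[where g = "\<lambda>j. f (vadd v\<^sub>0 e j)", OF _ True])
      fix j assume "t < j" "j \<le> d"
      then show "f (vadd v\<^sub>0 e (j - 1)) \<le> f (vadd v\<^sub>0 e j)"
        using threshold_step_passes[OF assms(5), of j] threshold_nonneg[OF assms(2)] by simp
    qed
    moreover have "0 \<le> real t * (f v / real k)"
      using threshold_nonneg[OF assms(1)] by (intro mult_nonneg_nonneg) simp_all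
    ultimately show ?thesis by linarith
  next
    case False
    have "f (vadd v\<^sub>0 e t) - f (vadd v\<^sub>0 e d) \<le> real (t - d) * (f v\<^sub>0 / real k)"
      using assms(5,7) False by (intro threshold_step_beyond) auto
    also have "\<dots> \<le> real t * (f v / real k)"
      using threshold_nonneg[OF assms(2)] threshold_mono[OF assms(6)] by (intro mult_mono) auto
    finally show ?thesis by linarith
  qed
  finally show ?thesis .
qed

text \<open>\<open>placed e x b g\<close>: when \<open>e\<close> was processed, the solution was at the state \<open>x\<^sub>0\<close>, was offered
  \<open>d = d\<^bsub>(x\<^sub>0,e)\<^esub>\<close> copies of \<open>e\<close> with gain \<open>g\<close>, and took them iff \<open>b\<close>.\<close>
definition placed :: "'a \<Rightarrow> 'a ivec \<Rightarrow> bool \<Rightarrow> real \<Rightarrow> bool" where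
  "placed e x b g \<longleftrightarrow> (\<exists>x\<^sub>0 d. supp_in E x\<^sub>0 \<and> vadd x\<^sub>0 e (x e) \<le> x \<and> f x\<^sub>0 \<le> f x \<and>
     threshold_step x\<^sub>0 e d \<and> g = f (vadd x\<^sub>0 e d) - f x\<^sub>0 \<and> x e = (if b then d else 0))"

lemma placed_raise:
  assumes "placed e x b g" "supp_in E x" "e \<in> E" "t \<le> alpha_k"
  shows "f (vadd x e (t - x e)) - f x \<le> real t * (f x / real k) + (if b then 0 else g)"
proof -
  obtain x\<^sub>0 d where x\<^sub>0: "supp_in E x\<^sub>0" "vadd x\<^sub>0 e (x e) \<le> x" "f x\<^sub>0 \<le> f x" "threshold_step x\<^sub>0 e d"
    "g = f (vadd x\<^sub>0 e d) - f x\<^sub>0" "x e = (if b then d else 0)"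
    using assms(1) unfolding placed_def by blast
  show ?thesis
  proof (cases b)
    case True
    then show ?thesis
      using raise_after_taken[OF assms(2) x\<^sub>0(1) assms(3) _ x\<^sub>0(4,3) assms(4)] x\<^sub>0(2,6) by simp
  next
    case False
    then show ?thesis
      using raise_after_skipped[OF assms(2) x\<^sub>0(1) assms(3) _ x\<^sub>0(4,3) assms(4)] x\<^sub>0(2,5,6) by simp
  qed
qed

lemma placed_mono:
  assumes "placed e x b g" "x \<le> x'" "x' e = x e" "f x \<le> f x'"
  shows "placed e x' b g"
proof -
  obtain x\<^sub>0 d where "supp_in E x\<^sub>0" "vadd x\<^sub>0 e (x e) \<le> x" "f x\<^sub>0 \<le> f x" "threshold_step x\<^sub>0 e d"
    "g = f (vadd x\<^sub>0 e d) - f x\<^sub>0" "x e = (if b then d else 0)"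
    using assms(1) unfolding placed_def by blast
  with assms(2-4) show ?thesis
    unfolding placed_def by (intro exI[of _ x\<^sub>0] exI[of _ d]) (auto intro: order_trans)
qed

lemma placed_now:
  assumes "supp_in E x" "x e = 0" "threshold_step x e d"
  shows "placed e (if b then vadd x e d else x) b (f (vadd x e d) - f x)"
  using assms threshold_step_increases[OF assms(3,1)]
  unfolding placed_def by (intro exI[of _ x] exI[of _ d]) (auto simp: vadd_def le_fun_def)

lemma placed_skipped: "placed e x False g \<Longrightarrow> x e = 0"
  by (auto simp: placed_def)

text \<open>\<open>vrestrict x (set A)\<close> is the solution at the moment \<open>b\<close> was added.\<close>
definition threshold_chain :: "'a ivec \<Rightarrow> 'a list \<Rightarrow> bool" where
  "threshold_chain x L \<longleftrightarrow> (\<forall>A b C. L = A @ b # C \<longrightarrow>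
     real (x b) * (f (vrestrict x (set A)) / real k)
       \<le> f (vrestrict x (insert b (set A))) - f (vrestrict x (set A)))"

lemma threshold_chain_snoc:
  assumes chain: "threshold_chain x L" and "e \<notin> set L" and support: "\<forall>e'. 0 < x e' \<longrightarrow> e' \<in> set L"
    and gain: "real d * (f x / real k) \<le> f (vadd x e d) - f x"
  shows "threshold_chain (vadd x e d) (L @ [e])"
  unfolding threshold_chain_def
proof (intro allI impI)
  fix A b C assume split: "L @ [e] = A @ b # C"
  let ?x' = "vadd x e d"
  show "real (?x' b) * (f (vrestrict ?x' (set A)) / real k)
      \<le> f (vrestrict ?x' (insert b (set A))) - f (vrestrict ?x' (set A))"
  proof (cases C rule: rev_cases)
    case Nil
    then have "A = L" "b = e"
      using split by auto
    moreover have "x e = 0"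
      using support \<open>e \<notin> set L\<close> by auto
    moreover have "vrestrict ?x' (set L) = x" "vrestrict ?x' (insert e (set L)) = ?x'"
      using support \<open>e \<notin> set L\<close> by (auto simp: vrestrict_def vadd_def fun_eq_iff)
    ultimately show ?thesis
      using gain by (simp add: vadd_def)
  next
    case (snoc C' c)
    then have L: "L = A @ b # C'"
      using split by auto
    then have "e \<notin> insert b (set A)"
      using \<open>e \<notin> set L\<close> by auto
    then have "vrestrict ?x' (set A) = vrestrict x (set A)"
      "vrestrict ?x' (insert b (set A)) = vrestrict x (insert b (set A))" "?x' b = x b"
      by (auto intro!: vrestrict_cong simp: vadd_def)
    with chain L show ?thesis
      unfolding threshold_chain_def by auto
  qed
qed

lemma threshold_chain_take:
  assumes chain: "threshold_chain x (filter (\<lambda>e. 0 < x e) ox)" and "e \<notin> set ox" "x e = 0"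
    and support: "\<forall>e'. 0 < x e' \<longrightarrow> e' \<in> set ox" and step: "threshold_step x e d"
  shows "threshold_chain (vadd x e d) (filter (\<lambda>e'. 0 < vadd x e d e') (ox @ [e]))"
proof (cases "d = 0")
  case True
  with chain show ?thesis
    unfolding filter_positive_vadd_snoc[of e ox x d, OF assms(2,3)] by simp
next
  case False
  have "threshold_chain (vadd x e d) (filter (\<lambda>e. 0 < x e) ox @ [e])"
  proof (rule threshold_chain_snoc[OF chain])
    show "e \<notin> set (filter (\<lambda>e. 0 < x e) ox)" "\<forall>e'. 0 < x e' \<longrightarrow> e' \<in> set (filter (\<lambda>e. 0 < x e) ox)"
      using assms(2) support by auto
  qed (rule threshold_step_gain[OF step])
  with False show ?thesis
    unfolding filter_positive_vadd_snoc[of e ox x d, OF assms(2,3)] by simp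
qed

text \<open>Invariant of one of the two solutions built in step 3: \<open>D\<close> is the set of processed
  elements, \<open>ox\<close> the order of addition, \<open>B e\<close> records whether \<open>e\<close> went to this solution and
  \<open>g e\<close> is the gain this solution offered for \<open>e\<close>.\<close>
definition solution_inv :: "'a set \<Rightarrow> 'a ivec \<Rightarrow> 'a list \<Rightarrow> ('a \<Rightarrow> bool) \<Rightarrow> ('a \<Rightarrow> real) \<Rightarrow> bool" where
  "solution_inv D x ox B g \<longleftrightarrow> supp_in E x \<and> (\<forall>e. e \<notin> D \<longrightarrow> x e = 0) \<and> (\<forall>e. x e \<le> alpha_k) \<and>
     distinct ox \<and> set ox \<subseteq> D \<and> (\<forall>e. 0 < x e \<longrightarrow> e \<in> set ox) \<and>
     threshold_chain x (filter (\<lambda>e. 0 < x e) ox) \<and>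
     (\<forall>e\<in>D. placed e x (B e) (g e)) \<and> (\<Sum>e\<in>{e\<in>D. B e}. g e) \<le> f x - f (\<lambda>_. 0)"

lemma solution_inv_take:
  assumes inv: "solution_inv D x ox B g" and "finite D" "e \<in> E" "e \<notin> D"
    and step: "threshold_step x e d"
  shows "solution_inv (insert e D) (vadd x e d) (ox @ [e]) (B(e := True)) (g(e := f (vadd x e d) - f x))"
proof -
  let ?x' = "vadd x e d" and ?gain = "f (vadd x e d) - f x"
  have supp: "supp_in E x" and zero: "\<forall>e. e \<notin> D \<longrightarrow> x e = 0" and bound: "\<forall>e. x e \<le> alpha_k"
    and order: "distinct ox" "set ox \<subseteq> D" and support: "\<forall>e. 0 < x e \<longrightarrow> e \<in> set ox"
    and chain: "threshold_chain x (filter (\<lambda>e. 0 < x e) ox)"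
    and placed: "\<forall>e\<in>D. placed e x (B e) (g e)" and gains: "(\<Sum>e\<in>{e\<in>D. B e}. g e) \<le> f x - f (\<lambda>_. 0)"
    using inv unfolding solution_inv_def by blast+
  have xe: "x e = 0" and eo: "e \<notin> set ox"
    using zero order(2) \<open>e \<notin> D\<close> by auto
  have increases: "f x \<le> f ?x'"
    using threshold_step_increases[OF step supp] .
  have placed': "\<forall>e'\<in>insert e D. placed e' ?x' ((B(e := True)) e') ((g(e := ?gain)) e')"
  proof
    fix e' assume "e' \<in> insert e D"
    then consider "e' = e" | "e' \<in> D" "e' \<noteq> e"
      by blast
    then show "placed e' ?x' ((B(e := True)) e') ((g(e := ?gain)) e')"
    proof cases
      case 1
      then show ?thesis
        using placed_now[OF supp xe step, of True] by simp
    next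
      case 2
      then show ?thesis
        using placed increases le_vadd[of x e d] by (auto intro: placed_mono simp: vadd_def)
    qed
  qed
  have gains': "(\<Sum>e'\<in>{e'\<in>insert e D. (B(e := True)) e'}. (g(e := ?gain)) e') \<le> f ?x' - f (\<lambda>_. 0)"
    using gains sum_filter_update_True[OF \<open>finite D\<close> \<open>e \<notin> D\<close>, where B = B and g = g and v = ?gain] by linarith
  have "threshold_chain ?x' (filter (\<lambda>e'. 0 < ?x' e') (ox @ [e]))"
    using chain eo xe support step by (rule threshold_chain_take)
  moreover have "supp_in E ?x'"
    using supp \<open>e \<in> E\<close> by (rule supp_in_vadd)
  moreover have "\<forall>e'. e' \<notin> insert e D \<longrightarrow> ?x' e' = 0" "\<forall>e'. ?x' e' \<le> alpha_k"
    "\<forall>e'. 0 < ?x' e' \<longrightarrow> e' \<in> set (ox @ [e])"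
    using zero bound support xe threshold_step_le[OF step] by (auto simp: vadd_def)
  moreover have "distinct (ox @ [e])" "set (ox @ [e]) \<subseteq> insert e D"
    using order eo by auto
  ultimately show ?thesis
    unfolding solution_inv_def using placed' gains' by blast
qed

lemma solution_inv_skip:
  assumes inv: "solution_inv D x ox B g" and "e \<notin> D" and step: "threshold_step x e d"
  shows "solution_inv (insert e D) x ox (B(e := False)) (g(e := f (vadd x e d) - f x))"
proof -
  let ?gain = "f (vadd x e d) - f x"
  have supp: "supp_in E x" and zero: "\<forall>e. e \<notin> D \<longrightarrow> x e = 0" and order: "set ox \<subseteq> D"
    and placed: "\<forall>e\<in>D. placed e x (B e) (g e)" and gains: "(\<Sum>e\<in>{e\<in>D. B e}. g e) \<le> f x - f (\<lambda>_. 0)"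
    using inv unfolding solution_inv_def by blast+
  have "placed e x False ?gain"
    using placed_now[OF supp _ step, of False] zero \<open>e \<notin> D\<close> by simp
  with placed have placed': "\<forall>e'\<in>insert e D. placed e' x ((B(e := False)) e') ((g(e := ?gain)) e')"
    by auto
  have "(\<Sum>e'\<in>{e'\<in>insert e D. (B(e := False)) e'}. (g(e := ?gain)) e') \<le> f x - f (\<lambda>_. 0)"
    using gains sum_filter_update_False[OF \<open>e \<notin> D\<close>, where B = B and g = g and v = ?gain] by linarith
  moreover have "\<forall>e'. e' \<notin> insert e D \<longrightarrow> x e' = 0" "set ox \<subseteq> insert e D"
    using zero order by auto
  ultimately show ?thesis
    using inv placed' unfolding solution_inv_def by blast
qed

definition greedy_inv :: "'a set \<Rightarrow> 'a ivec \<Rightarrow> 'a list \<Rightarrow> 'a ivec \<Rightarrow> 'a list \<Rightarrow> bool" where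
  "greedy_inv D x ox y oy \<longleftrightarrow> (\<exists>B gx gy. solution_inv D x ox B gx \<and> solution_inv D y oy (\<lambda>e. \<not> B e) gy \<and>
     (\<forall>e\<in>D. if B e then gy e \<le> gx e else gx e \<le> gy e))"

lemma greedy_inv_swap: "greedy_inv D x ox y oy \<longleftrightarrow> greedy_inv D y oy x ox"
proof -
  have "greedy_inv D y oy x ox" if inv: "greedy_inv D x ox y oy" for x ox y oy
  proof -
    obtain B gx gy where "solution_inv D x ox B gx" "solution_inv D y oy (\<lambda>e. \<not> B e) gy"
        "\<forall>e\<in>D. if B e then gy e \<le> gx e else gx e \<le> gy e"
      using inv unfolding greedy_inv_def by blast
    then show ?thesis
      unfolding greedy_inv_def by (intro exI[of _ "\<lambda>e. \<not> B e"] exI[of _ gy] exI[of _ gx]) auto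
  qed
  then show ?thesis by blast
qed

lemma greedy_inv_init: "greedy_inv {} (\<lambda>_. 0) [] (\<lambda>_. 0) []"
  unfolding greedy_inv_def solution_inv_def threshold_chain_def by auto

lemma greedy_inv_supp: "greedy_inv D x ox y oy \<Longrightarrow> supp_in E x \<and> supp_in E y"
  unfolding greedy_inv_def solution_inv_def by blast

lemma greedy_inv_solution_inv:
  assumes "greedy_inv D x ox y oy"
  obtains B\<^sub>x g\<^sub>x B\<^sub>y g\<^sub>y where "solution_inv D x ox B\<^sub>x g\<^sub>x" "solution_inv D y oy B\<^sub>y g\<^sub>y"
  using assms unfolding greedy_inv_def by blast

lemma greedy_inv_take_first:
  assumes inv: "greedy_inv D x ox y oy" and "finite D" "e \<in> E" "e \<notin> D"
    and step_x: "threshold_step x e dx" and step_y: "threshold_step y e dy"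
    and larger: "f (vadd y e dy) - f y \<le> f (vadd x e dx) - f x"
  shows "greedy_inv (insert e D) (vadd x e dx) (ox @ [e]) y oy"
proof -
  obtain B gx gy where x: "solution_inv D x ox B gx" and y: "solution_inv D y oy (\<lambda>e. \<not> B e) gy"
      and cmp: "\<forall>e\<in>D. if B e then gy e \<le> gx e else gx e \<le> gy e"
    using inv unfolding greedy_inv_def by blast
  let ?B = "B(e := True)" and ?gx = "gx(e := f (vadd x e dx) - f x)" and ?gy = "gy(e := f (vadd y e dy) - f y)"
  have "solution_inv (insert e D) (vadd x e dx) (ox @ [e]) ?B ?gx"
    using x assms(2-4) step_x by (rule solution_inv_take)
  moreover have "solution_inv (insert e D) y oy ((\<lambda>e. \<not> B e)(e := False)) ?gy"
    using y \<open>e \<notin> D\<close> step_y by (rule solution_inv_skip)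
  moreover have "(\<lambda>e. \<not> B e)(e := False) = (\<lambda>e'. \<not> ?B e')"
    by auto
  moreover have "\<forall>e'\<in>insert e D. if ?B e' then ?gy e' \<le> ?gx e' else ?gx e' \<le> ?gy e'"
    using cmp larger by auto
  ultimately show ?thesis
    unfolding greedy_inv_def by (intro exI[of _ ?B] exI[of _ ?gx] exI[of _ ?gy]) auto
qed

lemma greedy_inv_step3:
  assumes "greedy_inv D x ox y oy" "finite D" "set es \<subseteq> E" "distinct es" "set es \<inter> D = {}"
    and "step3 f k \<alpha> es (x, ox, y, oy, c) = (x', ox', y', oy', c')"
  shows "greedy_inv (D \<union> set es) x' ox' y' oy'"
  using assms
proof (induction es arbitrary: D x ox y oy c)
  case Nil
  then show ?case by simp
next
  case (Cons e es)
  let ?dx = "fst (dsel f k \<alpha> x e)" and ?dy = "fst (dsel f k \<alpha> y e)"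
  let ?c = "c + snd (dsel f k \<alpha> x e) + snd (dsel f k \<alpha> y e) + 4"
  have e: "e \<in> E" "e \<notin> D"
    using Cons.prems(3,5) by auto
  have steps: "threshold_step x e ?dx" "threshold_step y e ?dy"
    using threshold_step_dsel greedy_inv_supp[OF Cons.prems(1)] e(1) by auto
  have rest: "finite (insert e D)" "set es \<subseteq> E" "distinct es" "set es \<inter> insert e D = {}"
    using Cons.prems(2-5) by auto
  have D: "insert e D \<union> set es = D \<union> set (e # es)"
    by auto
  show ?case
  proof (cases "f (vadd y e ?dy) - f y \<le> f (vadd x e ?dx) - f x")
    case True
    then have "step3 f k \<alpha> es (vadd x e ?dx, ox @ [e], y, oy, ?c) = (x', ox', y', oy', c')"
      using Cons.prems(6) by (simp add: Let_def)
    moreover have "greedy_inv (insert e D) (vadd x e ?dx) (ox @ [e]) y oy"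
      using Cons.prems(1,2) e steps True by (rule greedy_inv_take_first)
    ultimately show ?thesis
      using Cons.IH[OF _ rest] D by simp
  next
    case False
    then have "step3 f k \<alpha> es (x, ox, vadd y e ?dy, oy @ [e], ?c) = (x', ox', y', oy', c')"
      using Cons.prems(6) by (simp add: Let_def)
    moreover have "greedy_inv (insert e D) (vadd y e ?dy) (oy @ [e]) x ox"
    proof (rule greedy_inv_take_first[OF _ Cons.prems(2) e steps(2,1)])
      show "greedy_inv D y oy x ox"
        using Cons.prems(1) by (simp add: greedy_inv_swap)
      show "f (vadd x e ?dx) - f x \<le> f (vadd y e ?dy) - f y"
        using False by linarith
    qed
    ultimately show ?thesis
      using Cons.IH[OF _ rest] D by (simp add: greedy_inv_swap)
  qed
qed

section \<open>Trimming\<close>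

lemma threshold_chain_gain:
  assumes "supp_in E x" "threshold_chain x (A @ B @ C)"
  shows "real (sum_list (map x B)) * (f (vrestrict x (set A)) / real k)
    \<le> f (vrestrict x (set (A @ B))) - f (vrestrict x (set A))"
  using assms(2)
proof (induction B arbitrary: C rule: rev_induct)
  case Nil
  then show ?case by simp
next
  case (snoc b B)
  let ?a = "f (vrestrict x (set A)) / real k" and ?ab = "f (vrestrict x (set (A @ B))) / real k"
  have IH: "real (sum_list (map x B)) * ?a \<le> f (vrestrict x (set (A @ B))) - f (vrestrict x (set A))"
    using snoc by simp
  have "0 \<le> real (sum_list (map x B)) * ?a"
    using threshold_nonneg[OF supp_in_vrestrict[OF assms(1)]] by (intro mult_nonneg_nonneg) simp_all
  then have "?a \<le> ?ab"
    using IH by (intro threshold_mono) linarith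
  then have "real (x b) * ?a \<le> real (x b) * ?ab"
    by (intro mult_left_mono) simp_all
  moreover have "real (x b) * ?ab \<le> f (vrestrict x (insert b (set (A @ B)))) - f (vrestrict x (set (A @ B)))"
    using snoc.prems unfolding threshold_chain_def by (metis append.assoc append_Cons append_Nil)
  ultimately show ?case
    using IH by (simp add: algebra_simps insert_commute)
qed

lemma solution_inv_positive_part:
  assumes "solution_inv E x ox B g"
  shows "distinct (filter (\<lambda>e. 0 < x e) ox)" "set (filter (\<lambda>e. 0 < x e) ox) \<subseteq> E"
    "vrestrict x (set (filter (\<lambda>e. 0 < x e) ox)) = x"
  using assms unfolding solution_inv_def by (auto intro!: vrestrict_id)

lemma trim_feasible:
  assumes inv: "solution_inv E x ox B g"
  shows "drsmc_feasible E k (trim k x ox)"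
proof -
  have supp: "supp_in E x" and bound: "\<forall>e. x e \<le> alpha_k"
    using inv unfolding solution_inv_def by blast+
  obtain A S where L: "filter (\<lambda>e. 0 < x e) ox = A @ S" and trim: "trim k x ox = vrestrict x (set S)"
    and sum: "sum_list (map x S) \<le> k"
    using trim_eq_vrestrict_suffix[OF bound] by blast
  have "distinct S" "set S \<subseteq> E"
    using solution_inv_positive_part(1,2)[OF inv] unfolding L by auto
  then have "(\<Sum>e\<in>E. vrestrict x (set S) e) = sum_list (map x S)"
    using finite_E by (simp add: vrestrict_def sum.If_cases Int_absorb1 sum_list_distinct_conv_sum_set)
  moreover have "vrestrict x (set S) e \<le> k" for e
    using bound alpha_k_less_k by (simp add: vrestrict_def) (meson le_trans less_imp_le)
  ultimately show ?thesis
    unfolding drsmc_feasible_def trim using sum supp_in_vrestrict[OF supp] by simp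
qed

text \<open>If trimming removed something, the kept suffix has mass at least \<open>(1 - \<alpha>) k\<close>; each of
  its units gained at least \<open>f(a)/k\<close>, where \<open>a\<close> is the removed prefix, while by
  submodularity the suffix alone is worth at least \<open>f x - f a\<close>.\<close>
lemma trim_value:
  assumes inv: "solution_inv E x ox B g"
  shows "(1 - \<alpha>) * f x \<le> (2 - \<alpha>) * f (trim k x ox)"
proof -
  have supp: "supp_in E x" and bound: "\<forall>e. x e \<le> alpha_k"
    using inv unfolding solution_inv_def by blast+
  obtain A S where L: "filter (\<lambda>e. 0 < x e) ox = A @ S" and trim: "trim k x ox = vrestrict x (set S)"
    and cases: "A = [] \<or> k < sum_list (map x S) + alpha_k"
    using trim_eq_vrestrict_suffix[OF bound] by blast
  have x: "vrestrict x (set (A @ S)) = x"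
    using solution_inv_positive_part(3)[OF inv] unfolding L .
  have f0: "0 \<le> f (\<lambda>_. 0)"
    using f_nonneg by simp
  from cases show ?thesis
  proof
    assume "A = []"
    then have "trim k x ox = x"
      using trim x by simp
    then show ?thesis
      using f_nonneg[OF supp] by (simp add: mult_right_mono)
  next
    assume "k < sum_list (map x S) + alpha_k"
    then have mass: "(1 - \<alpha>) * real k \<le> real (sum_list (map x S))"
      using alpha_k_le by (simp add: algebra_simps)
    define a where "a = f (vrestrict x (set A))"
    have a: "0 \<le> a"
      unfolding a_def by (rule f_nonneg[OF supp_in_vrestrict[OF supp]])
    have "f (vrestrict x (set (A @ S))) - f (vrestrict x (set A)) \<le> f (vrestrict x (set S)) - f (\<lambda>_. 0)"
      using vrestrict_append_increment[OF supp] solution_inv_positive_part(1,2)[OF inv] unfolding L by blast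
    then have suffix: "f x - a \<le> f (trim k x ox) - f (\<lambda>_. 0)"
      unfolding x trim a_def .
    have "real (sum_list (map x S)) * (a / real k) \<le> f x - a"
      using threshold_chain_gain[OF supp, of A S "[]"] inv
      unfolding solution_inv_def L x a_def by simp
    moreover have "(1 - \<alpha>) * real k * (a / real k) \<le> real (sum_list (map x S)) * (a / real k)"
      using mass a by (intro mult_right_mono) simp_all
    ultimately have "(1 - \<alpha>) * a \<le> f x - a"
      using k_pos by simp
    moreover have "(1 - \<alpha>) * (f x - a) \<le> (1 - \<alpha>) * f (trim k x ox)"
      using suffix f0 \<alpha>_less_1 by (intro mult_left_mono) simp_all
    ultimately show ?thesis
      using suffix f0 by (simp add: algebra_simps)
  qed
qed

section \<open>Approximation guarantee\<close>

lemma greedy_inv_disjoint: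
  assumes "greedy_inv E x ox y oy"
  shows "x e = 0 \<or> y e = 0"
proof (cases "e \<in> E")
  case True
  obtain B gx gy where "solution_inv E x ox B gx" "solution_inv E y oy (\<lambda>e. \<not> B e) gy"
    using assms unfolding greedy_inv_def by blast
  with True have "placed e x (B e) (gx e)" "placed e y (\<not> B e) (gy e)"
    unfolding solution_inv_def by blast+
  then show ?thesis
    by (cases "B e") (auto dest: placed_skipped)
next
  case False
  then show ?thesis
    using greedy_inv_supp[OF assms] by (simp add: supp_in_def)
qed

text \<open>Per unit of \<open>w\<close>, raising \<open>x\<close> gains at most its threshold \<open>f x / k\<close>, except at the
  elements that went to \<open>y\<close>, where it gains at most what \<open>x\<close> offered and hence at most
  what \<open>y\<close> gained.\<close>
lemma sup_small_le:
  assumes inv: "greedy_inv E x ox y oy"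
    and w: "supp_in E w" "(\<Sum>e\<in>E. w e) \<le> k" "\<forall>e. w e \<le> alpha_k"
  shows "f (sup w x) \<le> 2 * f x + f y - f (\<lambda>_. 0)"
proof -
  obtain B gx gy where x: "solution_inv E x ox B gx" and y: "solution_inv E y oy (\<lambda>e. \<not> B e) gy"
      and cmp: "\<forall>e\<in>E. if B e then gy e \<le> gx e else gx e \<le> gy e"
    using inv unfolding greedy_inv_def by blast
  have supp: "supp_in E x" and placed: "\<forall>e\<in>E. placed e x (B e) (gx e)"
    using x unfolding solution_inv_def by blast+
  have y_gains: "(\<Sum>e\<in>{e\<in>E. \<not> B e}. gy e) \<le> f y - f (\<lambda>_. 0)"
    using y unfolding solution_inv_def by blast
  let ?c = "\<lambda>e. w e - x e"
  have "sup w x = x + ?c"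
    by (auto simp: fun_eq_iff sup_nat_def)
  then have "f (sup w x) - f x = f (x + ?c) - f x"
    by simp
  also have "\<dots> \<le> (\<Sum>e\<in>E. f (vadd x e (?c e)) - f x)"
    using w(1) supp by (intro add_increment_le_sum) (auto simp: supp_in_def)
  also have "\<dots> \<le> (\<Sum>e\<in>E. real (w e) * (f x / real k) + (if B e then 0 else gx e))"
    using placed supp w(3) by (intro sum_mono placed_raise) auto
  also have "\<dots> = (\<Sum>e\<in>E. real (w e) * (f x / real k)) + (\<Sum>e\<in>E. if \<not> B e then gx e else 0)"
    by (subst sum.distrib[symmetric]) (rule sum.cong, auto)
  also have "\<dots> = real (\<Sum>e\<in>E. w e) * (f x / real k) + (\<Sum>e\<in>{e\<in>E. \<not> B e}. gx e)"
    using finite_E by (simp add: sum_distrib_right sum_divide_distrib sum.inter_filter)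
  also have "\<dots> \<le> f x + (\<Sum>e\<in>{e\<in>E. \<not> B e}. gy e)"
  proof (rule add_mono)
    have "real (\<Sum>e\<in>E. w e) * (f x / real k) \<le> real k * (f x / real k)"
      using w(2) threshold_nonneg[OF supp] by (intro mult_right_mono) (simp_all only: of_nat_le_iff)
    then show "real (\<Sum>e\<in>E. w e) * (f x / real k) \<le> f x"
      using k_pos by simp
    show "(\<Sum>e\<in>{e\<in>E. \<not> B e}. gx e) \<le> (\<Sum>e\<in>{e\<in>E. \<not> B e}. gy e)"
      using cmp by (intro sum_mono) auto
  qed
  finally show ?thesis
    using y_gains by linarith
qed

lemma small_part_bound:
  assumes inv: "greedy_inv E x ox y oy"
    and w: "supp_in E w" "(\<Sum>e\<in>E. w e) \<le> k" "\<forall>e. w e \<le> alpha_k"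
  shows "f w \<le> 3 * f x + 3 * f y"
proof -
  have supp: "supp_in E x" "supp_in E y"
    using greedy_inv_supp[OF inv] by blast+
  have "f w + f (sup (sup w x) y) \<le> f (sup w x) + f (sup w y)"
    using w(1) supp greedy_inv_disjoint[OF inv] by (rule sup_disjoint_supports)
  moreover have "f (sup w x) \<le> 2 * f x + f y - f (\<lambda>_. 0)"
    using inv w by (rule sup_small_le)
  moreover have "f (sup w y) \<le> 2 * f y + f x - f (\<lambda>_. 0)"
    using inv w by (intro sup_small_le) (simp_all add: greedy_inv_swap)
  moreover have "0 \<le> f (sup (sup w x) y)" "0 \<le> f (\<lambda>_. 0)"
    using w(1) supp by (auto intro!: f_nonneg simp: supp_in_def)
  ultimately show ?thesis by linarith
qed

lemma card_large_le:
  assumes "(\<Sum>e\<in>E. w e) \<le> k"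
  shows "real (card {e\<in>E. alpha_k < w e}) \<le> 1 / \<alpha>"
proof -
  let ?n = "card {e\<in>E. alpha_k < w e}"
  have "?n * (alpha_k + 1) = (\<Sum>e\<in>{e\<in>E. alpha_k < w e}. alpha_k + 1)"
    by simp
  also have "\<dots> \<le> (\<Sum>e\<in>{e\<in>E. alpha_k < w e}. w e)"
    by (intro sum_mono) auto
  also have "\<dots> \<le> (\<Sum>e\<in>E. w e)"
    using finite_E by (intro sum_mono2) auto
  finally have "?n * (alpha_k + 1) \<le> k"
    using assms by linarith
  then have "real (?n * (alpha_k + 1)) \<le> real k"
    by (simp only: of_nat_le_iff)
  then have "real ?n * (real alpha_k + 1) \<le> real k"
    by (simp add: algebra_simps)
  moreover have "real ?n * (\<alpha> * real k) \<le> real ?n * (real alpha_k + 1)"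
    using alpha_k_gt by (intro mult_left_mono) simp_all
  ultimately have "(real ?n * \<alpha>) * real k \<le> 1 * real k"
    by (simp add: algebra_simps)
  then have "real ?n * \<alpha> \<le> 1"
    using k_pos by (simp only: mult_le_cancel_right)
  then show ?thesis
    using \<alpha>_pos by (simp add: field_simps)
qed

text \<open>Elements on which \<open>w\<close> exceeds \<open>\<alpha> k\<close> are worth at most a best single-element
  vector each, and there are at most \<open>1/\<alpha>\<close> of them.\<close>
lemma large_part_bound:
  assumes w: "drsmc_feasible E k w"
    and single: "\<forall>e\<in>E. \<forall>d. alpha_k < d \<longrightarrow> d \<le> k \<longrightarrow> f (vunit e d) \<le> M" and "0 \<le> M"
  shows "f w \<le> f (vrestrict w {e. w e \<le> alpha_k}) + M / \<alpha>"
proof -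
  let ?small = "vrestrict w {e. w e \<le> alpha_k}" and ?large = "vrestrict w {e. alpha_k < w e}"
  have supp: "supp_in E w" and sum: "(\<Sum>e\<in>E. w e) \<le> k" and entries: "\<forall>e\<in>E. w e \<le> k"
    using w unfolding drsmc_feasible_def by blast+
  have large: "supp_in E ?large" and small: "supp_in E ?small"
    using supp by (simp_all add: supp_in_vrestrict)
  have f0: "0 \<le> f (\<lambda>_. 0)"
    using f_nonneg by simp
  have "w = ?small + ?large" "(\<lambda>_. 0) + ?large = ?large"
    by (auto simp: vrestrict_def fun_eq_iff)
  then have "f w - f ?small \<le> f ?large - f (\<lambda>_. 0)"
    using add_increment_antimono[OF large supp_in_zero small] by (simp add: le_fun_def)
  also have "\<dots> \<le> (\<Sum>e\<in>E. f (vadd (\<lambda>_. 0) e (?large e)) - f (\<lambda>_. 0))"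
    using add_increment_le_sum[OF large supp_in_zero] \<open>(\<lambda>_. 0) + ?large = ?large\<close> by simp
  also have "\<dots> \<le> (\<Sum>e\<in>E. if alpha_k < w e then M else 0)"
  proof (rule sum_mono)
    fix e assume "e \<in> E"
    show "f (vadd (\<lambda>_. 0) e (?large e)) - f (\<lambda>_. 0) \<le> (if alpha_k < w e then M else 0)"
    proof (cases "alpha_k < w e")
      case True
      then have "f (vunit e (w e)) \<le> M"
        using single entries \<open>e \<in> E\<close> by blast
      with True f0 show ?thesis
        by (simp add: vrestrict_def vunit_eq_vadd)
    qed (simp add: vrestrict_def)
  qed
  also have "\<dots> = real (card {e\<in>E. alpha_k < w e}) * M"
    using finite_E by (simp add: sum.inter_filter[symmetric])
  also have "\<dots> \<le> 1 / \<alpha> * M"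
    using card_large_le[OF sum] \<open>0 \<le> M\<close> by (rule mult_right_mono)
  finally show ?thesis by simp
qed

lemma opt_bound:
  assumes inv: "greedy_inv E x ox y oy" and w: "drsmc_feasible E k w"
    and single: "\<forall>e\<in>E. \<forall>d. alpha_k < d \<longrightarrow> d \<le> k \<longrightarrow> f (vunit e d) \<le> M" and "0 \<le> M"
  shows "f w \<le> 3 * f x + 3 * f y + M / \<alpha>"
proof -
  let ?small = "vrestrict w {e. w e \<le> alpha_k}"
  have "supp_in E ?small" "(\<Sum>e\<in>E. ?small e) \<le> k" "\<forall>e. ?small e \<le> alpha_k"
  proof -
    show "supp_in E ?small"
      using w by (simp add: drsmc_feasible_def supp_in_vrestrict)
    have "(\<Sum>e\<in>E. ?small e) \<le> (\<Sum>e\<in>E. w e)"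
      by (intro sum_mono) (simp add: vrestrict_def)
    then show "(\<Sum>e\<in>E. ?small e) \<le> k"
      using w by (simp add: drsmc_feasible_def)
    show "\<forall>e. ?small e \<le> alpha_k"
      by (simp add: vrestrict_def)
  qed
  then have "f ?small \<le> 3 * f x + 3 * f y"
    by (intro small_part_bound[OF inv])
  with large_part_bound[OF w single \<open>0 \<le> M\<close>] show ?thesis
    by linarith
qed

lemma dsing_maximizes:
  assumes "e \<in> E"
  shows "alpha_k < fst (dsing f k \<alpha> e) \<and> fst (dsing f k \<alpha> e) \<le> k \<and>
     (\<forall>d. alpha_k < d \<longrightarrow> d \<le> k \<longrightarrow> f (vunit e d) \<le> f (vunit e (fst (dsing f k \<alpha> e))))"
proof -
  let ?P = "\<lambda>d. (f (vunit e d) \<ge> f (vunit e (d - 1)), 2::nat)"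
  define r where "r = fst (bsearch ?P (alpha_k + 1) k)"
  have "bsearch_spec (\<lambda>d. fst (?P d)) (alpha_k + 1) k r"
    unfolding r_def
  proof (rule bsearch_correct)
    fix i j assume "alpha_k + 1 < i" "i \<le> j" "fst (?P j)"
    then show "fst (?P i)"
      using marginal_antimono[OF supp_in_zero assms, of i j] by (simp add: marginal_def vunit_eq_vadd)
  qed
  then have r: "alpha_k < r" "r \<le> k"
    and up: "\<And>j. alpha_k + 1 < j \<Longrightarrow> j \<le> r \<Longrightarrow> f (vunit e (j - 1)) \<le> f (vunit e j)"
    and down: "\<And>j. r < j \<Longrightarrow> j \<le> k \<Longrightarrow> f (vunit e j) < f (vunit e (j - 1))"
    using alpha_k_less_k by (auto simp: bsearch_spec_def not_le)
  have "f (vunit e d) \<le> f (vunit e r)" if d: "alpha_k < d" "d \<le> k" for d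
  proof (cases "d \<le> r")
    case True
    show ?thesis
      by (rule telescope_mono[where g = "\<lambda>j. f (vunit e j)", OF _ True]) (use up d in auto)
  next
    case False
    have "- f (vunit e r) \<le> - f (vunit e d)"
    proof (rule telescope_mono[where g = "\<lambda>j. - f (vunit e j)"])
      fix j assume "r < j" "j \<le> d"
      then show "- f (vunit e (j - 1)) \<le> - f (vunit e j)"
        using down[of j] d by simp
    qed (use False in simp)
    then show ?thesis by simp
  qed
  moreover have "fst (dsing f k \<alpha> e) = r"
    by (simp add: dsing_def Let_def alpha_k_def r_def)
  ultimately show ?thesis
    using r by simp
qed

lemma step1_maximizes:
  assumes "set es = E" "es \<noteq> []"
  shows "fst (fst (step1 f k \<alpha> es)) \<in> E \<and> snd (fst (step1 f k \<alpha> es)) \<le> k \<and>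
    (\<forall>e\<in>E. \<forall>d. alpha_k < d \<longrightarrow> d \<le> k \<longrightarrow>
       f (vunit e d) \<le> f (vunit (fst (fst (step1 f k \<alpha> es))) (snd (fst (step1 f k \<alpha> es)))))"
proof -
  define cands where "cands = map (\<lambda>e. (e, fst (dsing f k \<alpha> e))) es"
  define F where "F = (\<lambda>c. f (vunit (fst c) (snd c)))"
  define best where "best = foldl (\<lambda>b c. if F c > F b then c else b) (hd cands) (tl cands)"
  have "fst (step1 f k \<alpha> es) = best"
    unfolding step1_def Let_def best_def cands_def F_def by simp
  moreover have "hd cands # tl cands = cands"
    using assms(2) by (simp add: cands_def)
  then have best: "best \<in> set cands" "\<forall>c\<in>set cands. F c \<le> F best"
    using foldl_argmax[of F "hd cands" "tl cands"] unfolding best_def by simp_all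
  then obtain e\<^sub>m where e\<^sub>m: "e\<^sub>m \<in> E" "best = (e\<^sub>m, fst (dsing f k \<alpha> e\<^sub>m))"
    using assms(1) by (auto simp: cands_def)
  moreover have "f (vunit e d) \<le> F best" if "e \<in> E" "alpha_k < d" "d \<le> k" for e d
  proof -
    have "f (vunit e d) \<le> F (e, fst (dsing f k \<alpha> e))"
      using dsing_maximizes[OF \<open>e \<in> E\<close>] that by (simp add: F_def)
    also have "\<dots> \<le> F best"
      using best(2) \<open>e \<in> E\<close> assms(1) by (auto simp: cands_def)
    finally show ?thesis .
  qed
  ultimately show ?thesis
    using dsing_maximizes[OF e\<^sub>m(1)] by (simp add: F_def)
qed

lemma fastdrsub_output:
  assumes "set es = E" "distinct es" "es \<noteq> []"
  defines "z \<equiv> fst (fastdrsub f es k \<alpha>)"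
  obtains x ox y oy m where "greedy_inv E x ox y oy" "drsmc_feasible E k m"
    "\<forall>e\<in>E. \<forall>d. alpha_k < d \<longrightarrow> d \<le> k \<longrightarrow> f (vunit e d) \<le> f m"
    "z \<in> {trim k x ox, trim k y oy, m}"
    "f (trim k x ox) \<le> f z" "f (trim k y oy) \<le> f z" "f m \<le> f z"
proof -
  obtain x ox y oy c where s3: "step3 f k \<alpha> es (\<lambda>_. 0, [], \<lambda>_. 0, [], 0) = (x, ox, y, oy, c)"
    by (cases "step3 f k \<alpha> es (\<lambda>_. 0, [], \<lambda>_. 0, [], 0)") auto
  have "greedy_inv ({} \<union> set es) x ox y oy"
    by (rule greedy_inv_step3[OF greedy_inv_init _ _ _ _ s3]) (use assms(1,2) in auto)
  then have inv: "greedy_inv E x ox y oy"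
    using assms(1) by simp
  define m where "m = vunit (fst (fst (step1 f k \<alpha> es))) (snd (fst (step1 f k \<alpha> es)))"
  have m: "fst (fst (step1 f k \<alpha> es)) \<in> E" "snd (fst (step1 f k \<alpha> es)) \<le> k"
    "\<forall>e\<in>E. \<forall>d. alpha_k < d \<longrightarrow> d \<le> k \<longrightarrow> f (vunit e d) \<le> f m"
    using step1_maximizes[OF assms(1,3)] unfolding m_def by blast+
  have "drsmc_feasible E k m"
    using m(1,2) finite_E by (auto simp: drsmc_feasible_def m_def vunit_def supp_in_def)
  moreover have z: "z = (if f (trim k x ox) \<ge> f (trim k y oy) \<and> f (trim k x ox) \<ge> f m then trim k x ox
      else if f (trim k y oy) \<ge> f m then trim k y oy else m)"
    unfolding z_def fastdrsub_def Let_def s3 m_def by simp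
  moreover have "z \<in> {trim k x ox, trim k y oy, m}"
    unfolding z by simp
  moreover have "f (trim k x ox) \<le> f z" "f (trim k y oy) \<le> f z" "f m \<le> f z"
    unfolding z by auto
  ultimately show ?thesis
    using that[OF inv _ m(3)] by blast
qed

theorem fastdrsub_feasible:
  assumes "set es = E" "distinct es" "es \<noteq> []"
  shows "drsmc_feasible E k (fst (fastdrsub f es k \<alpha>))"
proof -
  obtain x ox y oy m where inv: "greedy_inv E x ox y oy" and m: "drsmc_feasible E k m"
    "\<forall>e\<in>E. \<forall>d. alpha_k < d \<longrightarrow> d \<le> k \<longrightarrow> f (vunit e d) \<le> f m"
    and z: "fst (fastdrsub f es k \<alpha>) \<in> {trim k x ox, trim k y oy, m}"
    "f (trim k x ox) \<le> f (fst (fastdrsub f es k \<alpha>))" "f (trim k y oy) \<le> f (fst (fastdrsub f es k \<alpha>))"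
    "f m \<le> f (fst (fastdrsub f es k \<alpha>))"
    by (rule fastdrsub_output[OF assms])
  obtain B\<^sub>x g\<^sub>x B\<^sub>y g\<^sub>y where x: "solution_inv E x ox B\<^sub>x g\<^sub>x" and y: "solution_inv E y oy B\<^sub>y g\<^sub>y"
    using inv by (rule greedy_inv_solution_inv)
  have "drsmc_feasible E k (trim k x ox)" "drsmc_feasible E k (trim k y oy)"
    using trim_feasible[OF x] trim_feasible[OF y] .
  with m(1) z(1) show ?thesis by auto
qed

theorem fastdrsub_approx:
  assumes "set es = E" "distinct es" "es \<noteq> []"
  shows "drsmc_opt E k f \<le> (6 * ((2 - \<alpha>) / (1 - \<alpha>)) + 1 / \<alpha>) * f (fst (fastdrsub f es k \<alpha>))"
proof -
  define z where "z = fst (fastdrsub f es k \<alpha>)"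
  define r where "r = (2 - \<alpha>) / (1 - \<alpha>)"
  obtain x ox y oy m where inv: "greedy_inv E x ox y oy" and m: "drsmc_feasible E k m"
    "\<forall>e\<in>E. \<forall>d. alpha_k < d \<longrightarrow> d \<le> k \<longrightarrow> f (vunit e d) \<le> f m"
    and z: "z \<in> {trim k x ox, trim k y oy, m}" "f (trim k x ox) \<le> f z" "f (trim k y oy) \<le> f z" "f m \<le> f z"
    unfolding z_def by (rule fastdrsub_output[OF assms])
  obtain B\<^sub>x g\<^sub>x B\<^sub>y g\<^sub>y where x: "solution_inv E x ox B\<^sub>x g\<^sub>x" and y: "solution_inv E y oy B\<^sub>y g\<^sub>y"
    using inv by (rule greedy_inv_solution_inv)
  have trimmed: "f v \<le> r * f z" if "solution_inv E v ov B g" "f (trim k v ov) \<le> f z" for v ov B g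
  proof -
    have "(1 - \<alpha>) * f v \<le> (2 - \<alpha>) * f z"
      using trim_value[OF that(1)] mult_left_mono[OF that(2), of "2 - \<alpha>"] \<alpha>_less_1 by linarith
    then show ?thesis
      using \<alpha>_less_1 by (simp add: r_def field_simps)
  qed
  have "0 \<le> f z"
    using f_nonneg[of m] m(1) z(4) unfolding drsmc_feasible_def by linarith
  have single: "\<forall>e\<in>E. \<forall>d. alpha_k < d \<longrightarrow> d \<le> k \<longrightarrow> f (vunit e d) \<le> f z"
  proof (intro ballI allI impI)
    fix e d assume "e \<in> E" "alpha_k < d" "d \<le> k"
    then have "f (vunit e d) \<le> f m"
      using m(2) by blast
    with z(4) show "f (vunit e d) \<le> f z" by linarith
  qed
  have "f w \<le> (6 * r + 1 / \<alpha>) * f z" if "drsmc_feasible E k w" for w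
  proof -
    have "f w \<le> 3 * f x + 3 * f y + f z / \<alpha>"
      using inv that single \<open>0 \<le> f z\<close> by (rule opt_bound)
    also have "\<dots> \<le> 3 * (r * f z) + 3 * (r * f z) + f z / \<alpha>"
      using trimmed[OF x z(2)] trimmed[OF y z(3)]
      by linarith
    finally show ?thesis
      by (simp add: algebra_simps)
  qed
  then show ?thesis
    unfolding z_def r_def by (rule drsmc_opt_le[OF finite_E])
qed

theorem fastdrsub_ratio:
  assumes "set es = E" "distinct es" "es \<noteq> []"
  shows "drsmc_opt E k f / (8 * ((2 - \<alpha>) / (1 - \<alpha>)) + 1 / \<alpha>) \<le> f (fst (fastdrsub f es k \<alpha>))"
proof -
  define z where "z = fst (fastdrsub f es k \<alpha>)"
  define r where "r = (2 - \<alpha>) / (1 - \<alpha>)"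
  have "0 \<le> r" "0 < 1 / \<alpha>"
    using \<alpha>_pos \<alpha>_less_1 by (simp_all add: r_def)
  have "0 \<le> f z"
    using fastdrsub_feasible[OF assms] f_nonneg unfolding z_def drsmc_feasible_def by blast
  have "drsmc_opt E k f \<le> (6 * r + 1 / \<alpha>) * f z"
    using fastdrsub_approx[OF assms] unfolding z_def r_def .
  also have "\<dots> \<le> (8 * r + 1 / \<alpha>) * f z"
    using \<open>0 \<le> r\<close> \<open>0 \<le> f z\<close> by (intro mult_right_mono) simp_all
  finally have "drsmc_opt E k f \<le> f z * (8 * r + 1 / \<alpha>)"
    by (simp only: mult.commute)
  moreover have "0 < 8 * r + 1 / \<alpha>"
    using \<open>0 \<le> r\<close> \<open>0 < 1 / \<alpha>\<close> by linarith
  ultimately show ?thesis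
    unfolding z_def[symmetric] r_def[symmetric] by (simp only: pos_divide_le_eq)
qed

end

section \<open>Query complexity\<close>

lemma nat_floor_mult_le:
  assumes "\<alpha> \<le> 1"
  shows "nat \<lfloor>\<alpha> * real k\<rfloor> \<le> k"
proof -
  have "\<alpha> * real k \<le> 1 * real k"
    using assms by (intro mult_right_mono) simp_all
  then have "\<lfloor>\<alpha> * real k\<rfloor> \<le> \<lfloor>real k\<rfloor>"
    by (intro floor_mono) simp
  then show ?thesis by simp
qed

lemma dsel_queries:
  assumes "\<alpha> \<le> 1" "0 < k"
  shows "real (snd (dsel f k \<alpha> v e)) \<le> 3 * (1 + log 2 (real k))"
proof -
  have "real (snd (bsearch (\<lambda>d. (f (vadd v e d) - f (vadd v e (d - 1)) \<ge> f v / real k, 3::nat))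
      0 (nat \<lfloor>\<alpha> * real k\<rfloor>))) \<le> real (3::nat) * (1 + log 2 (real k))"
    using nat_floor_mult_le[OF assms(1), of k] assms(2) by (intro bsearch_queries) simp_all
  then show ?thesis
    unfolding dsel_def by simp
qed

lemma dsing_queries:
  assumes "0 < k"
  shows "real (snd (dsing f k \<alpha> e)) \<le> 2 * (1 + log 2 (real k)) + 1"
proof -
  have "real (snd (bsearch (\<lambda>d. (f (vunit e d) \<ge> f (vunit e (d - 1)), 2::nat))
      (nat \<lfloor>\<alpha> * real k\<rfloor> + 1) k)) \<le> real (2::nat) * (1 + log 2 (real k))"
    using assms by (intro bsearch_queries) simp_all
  then show ?thesis
    unfolding dsing_def Let_def by simp
qed

lemma step3_queries:
  assumes "\<alpha> \<le> 1" "0 < k"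
  shows "real (snd (snd (snd (snd (step3 f k \<alpha> es (x, ox, y, oy, c))))))
     \<le> real c + real (length es) * (6 * (1 + log 2 (real k)) + 4)"
proof (induction es arbitrary: x ox y oy c)
  case Nil
  then show ?case by simp
next
  case (Cons e es)
  let ?c = "c + snd (dsel f k \<alpha> x e) + snd (dsel f k \<alpha> y e) + 4"
  have "\<exists>x' ox' y' oy'. step3 f k \<alpha> (e # es) (x, ox, y, oy, c) = step3 f k \<alpha> es (x', ox', y', oy', ?c)"
    by (simp add: Let_def) blast
  then obtain x' ox' y' oy' where step: "step3 f k \<alpha> (e # es) (x, ox, y, oy, c) = step3 f k \<alpha> es (x', ox', y', oy', ?c)"
    by blast
  have "real ?c \<le> real c + (6 * (1 + log 2 (real k)) + 4)"
    using dsel_queries[OF assms, of f x e] dsel_queries[OF assms, of f y e] by simp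
  with Cons.IH[of x' ox' y' oy' ?c] show ?case
    unfolding step by (simp add: algebra_simps)
qed

lemma ln_2_ge_half: "1 / 2 \<le> ln (2::real)"
proof -
  have "ln (1 / 2 :: real) \<le> 1 / 2 - 1"
    by (rule ln_le_minus_one) simp
  then show ?thesis
    by (simp add: ln_div)
qed

theorem fastdrsub_queries:
  assumes "es \<noteq> []" "0 < k" "\<alpha> \<le> 1"
  shows "real (snd (fastdrsub f es k \<alpha>)) \<le> 16 * real (length es) * (1 + ln (real k))"
proof -
  define n where "n = real (length es)"
  define L where "L = log 2 (real k)"
  have n: "1 \<le> n"
    using assms(1) by (simp add: n_def Suc_le_eq)
  have ln_k: "0 \<le> ln (real k)"
    using assms(2) by simp
  have "L = ln (real k) / ln 2"
    by (simp add: L_def log_def)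
  also have "\<dots> \<le> 2 * ln (real k)"
  proof -
    have "ln (real k) * 1 \<le> ln (real k) * (2 * ln 2)"
      using ln_2_ge_half ln_k by (intro mult_left_mono) simp_all
    then show ?thesis
      by (simp add: pos_divide_le_eq algebra_simps)
  qed
  finally have L: "L \<le> 2 * ln (real k)" .
  have "real (snd (step1 f k \<alpha> es)) = (\<Sum>e\<leftarrow>es. real (snd (dsing f k \<alpha> e)))"
    unfolding step1_def Let_def by (simp add: sum_list_of_nat[symmetric] comp_def)
  also have "\<dots> \<le> (\<Sum>e\<leftarrow>es. 2 * (1 + L) + 1)"
    using dsing_queries[OF assms(2)] unfolding L_def by (rule sum_list_mono)
  also have "\<dots> = n * (2 * (1 + L) + 1)"
    by (simp add: sum_list_triv n_def)
  finally have "real (snd (step1 f k \<alpha> es)) \<le> n * (2 * (1 + L) + 1)" .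
  moreover have "real (snd (snd (snd (snd (step3 f k \<alpha> es (\<lambda>_. 0, [], \<lambda>_. 0, [], 0)))))) \<le> n * (6 * (1 + L) + 4)"
    using step3_queries[OF assms(3,2), of f es "\<lambda>_. 0" "[]" "\<lambda>_. 0" "[]" 0] by (simp add: n_def L_def)
  moreover have "snd (fastdrsub f es k \<alpha>)
      = snd (step1 f k \<alpha> es) + snd (snd (snd (snd (step3 f k \<alpha> es (\<lambda>_. 0, [], \<lambda>_. 0, [], 0))))) + 3"
    unfolding fastdrsub_def Let_def by simp
  ultimately have "real (snd (fastdrsub f es k \<alpha>)) \<le> n * (16 + 8 * L)"
    using n by (simp add: algebra_simps)
  also have "\<dots> \<le> n * (16 + 16 * ln (real k))"
    using L n by (intro mult_left_mono) simp_all
  finally show ?thesis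
    by (simp add: n_def algebra_simps)
qed

lemma ratio_at_optimal_alpha:
  "let \<alpha> = (2 * sqrt 2 - 1) / 7 :: real in 1 / (8 * ((2 - \<alpha>) / (1 - \<alpha>)) + 1 / \<alpha>) = 1 / (17 + 4 * sqrt 2)"
proof -
  define s where "s = sqrt (2::real)"
  have s2: "s * s = 2"
    unfolding s_def by simp
  have "1 < s"
    unfolding s_def by (simp add: real_less_rsqrt)
  have "s < 2"
    unfolding s_def by (rule real_less_lsqrt) simp_all
  define a where "a = (2 * s - 1) / 7"
  have "0 < a" "a < 1"
    using \<open>1 < s\<close> \<open>s < 2\<close> by (simp_all add: a_def)
  have "(2 + s / 4) * (1 - a) = 2 - a"
    unfolding a_def by (simp add: algebra_simps s2) (simp add: field_simps)
  then have "(2 - a) / (1 - a) = 2 + s / 4"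
    using \<open>a < 1\<close> by (simp add: field_simps)
  moreover have "(2 * s + 1) * a = 1"
    unfolding a_def by (simp add: algebra_simps s2)
  then have "1 / a = 2 * s + 1"
    using \<open>0 < a\<close> by (simp add: field_simps)
  ultimately show ?thesis
    unfolding Let_def a_def[symmetric] s_def[symmetric] by simp
qed

theorem theorem1:
  shows "(\<forall>(f :: 'a ivec \<Rightarrow> real) (es :: 'a list) (k :: nat) (\<alpha> :: real).
            distinct es \<and> es \<noteq> [] \<and> 0 < k \<and> 0 < \<alpha> \<and> \<alpha> < 1 \<and>
            nonneg_on (set es) f \<and> dr_submodular (set es) f \<longrightarrow>
              drsmc_feasible (set es) k (fst (fastdrsub f es k \<alpha>)) \<and>
              f (fst (fastdrsub f es k \<alpha>))
                \<ge> drsmc_opt (set es) k f / (8 * ((2 - \<alpha>) / (1 - \<alpha>)) + 1 / \<alpha>))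
       \<and> (\<exists>C :: real. \<forall>(f :: 'a ivec \<Rightarrow> real) (es :: 'a list) (k :: nat) (\<alpha> :: real).
            distinct es \<and> es \<noteq> [] \<and> 0 < k \<and> 0 < \<alpha> \<and> \<alpha> < 1 \<and>
            nonneg_on (set es) f \<and> dr_submodular (set es) f \<longrightarrow>
              real (snd (fastdrsub f es k \<alpha>)) \<le> C * real (length es) * (1 + ln (real k)))
       \<and> (let \<alpha> = (2 * sqrt 2 - 1) / 7 :: real
          in 1 / (8 * ((2 - \<alpha>) / (1 - \<alpha>)) + 1 / \<alpha>) = 1 / (17 + 4 * sqrt 2))"
proof (intro conjI allI impI exI[of _ "16 :: real"], goal_cases)
  case (1 f es k \<alpha>)
  then interpret fastdrsub_setting "set es" f k \<alpha>
    by unfold_locales auto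
  from 1 show ?case
    by (intro fastdrsub_feasible) auto
next
  case (2 f es k \<alpha>)
  then interpret fastdrsub_setting "set es" f k \<alpha>
    by unfold_locales auto
  from 2 show ?case
    by (intro fastdrsub_ratio) auto
next
  case (3 f es k \<alpha>)
  then show ?case
    by (intro fastdrsub_queries) auto
next
  case 4
  show ?case
    by (rule ratio_at_optimal_alpha)
qed

end
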